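(* Let $\Sigma$ be a complete fan in $N_{\mathbb R}$ and $\mathbb L=(L,\Sigma_L,\mu,\pi,\varphi)$ a tropical Lagrangian multi-section over $\Sigma$. Then there exists a separable tropical Lagrangian multi-section $\mathbb L_{sep}$ over $\Sigma$ such that $\mathbb L_{sep}\le\mathbb L$. In particular, every tropical Lagrangian multi-section is combinatorially equivalent to a separable one.
   Context: $N$ is a lattice of rank $n$, $M=\mathrm{Hom}(N,\mathbb Z)$, $N_{\mathbb R}=N\otimes\mathbb R$, $\Sigma(k)$ the $k$-dimensional cones of $\Sigma$. A cone complex is a topological space $X$ with a finite collection $\Sigma_X$ of closed subsets (cones) and for each cone $\sigma$ a finitely generated group $M(\sigma)$ of continuous real functions on $\sigma$ such that evaluation identifies $\sigma$ homeomorphically with a convex rational polyhedral cone in $(M(\sigma)\otimes\mathbb R)^\vee$, preimages of faces are cones with $M$ given by restriction, and $X$ is the disjoint union of the relative interiors of its cones. A morphism sends cones into cones and pulls back $M(\sigma)$ into $M(\sigma')$. A weight $\mu:X\to\mathbb Z_{>0}$ is constant on relative interiors; $\mathrm{Tr}_f(\mu)(x)=\sum_{x'\in f^{-1}(x)}\mu(x')$. A branched covering map $\pi:(L,\Sigma_L,\mu)\to(B,\Sigma_B)$ is a surjective morphism mapping each cone homeomorphically onto a cone and with $\mathrm{Tr}_{\pi|_V}(\mu)$ constant for every connected open $U\subset B$ and connected component $V$ of $\pi^{-1}(U)$. A tropical Lagrangian multi-section of rank $r$ over $\Sigma$ is $\mathbb L=(L,\Sigma_L,\mu,\pi,\varphi)$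 with $\pi:(L,\Sigma_L,\mu)\to(N_{\mathbb R},\Sigma)$ a branched covering with $\mathrm{Tr}_\pi(\mu)=r$ and $\varphi:L\to\mathbb R$ continuous with $\varphi|_{\sigma'}\in M(\sigma')$ for all cones $\sigma'$. It is connected if $L$ is. For tropical Lagrangian multi-sections $\mathbb L_1,\mathbb L_2$ of the same rank, $\mathbb L_1\le\mathbb L_2$ means there is a surjective morphism of cone complexes $f:L_2\to L_1$ with $\pi_1\circ f=\pi_2$, $\mathrm{Tr}_f(\mu_2)=\mu_1$ and $f^*\varphi_1=\varphi_2$. For connected $\mathbb L_1,\mathbb L_2$, write $\mathbb L_2\sim_c\mathbb L_1$ if they have the same rank and there is $\mathbb L$ with $\mathbb L\le\mathbb L_1$ and $\mathbb L\le\mathbb L_2$; combinatorial equivalence is the equivalence relation generated by $\sim_c$. $\mathbb L$ is $k$-separable if it is connected and for every $\tau\in\Sigma(k)$ and distinct cones $\tau^{(\alpha)},\tau^{(\beta)}$ of $L$ mapping onto $\tau$ one has $\varphi|_{\tau^{(\alpha)}}\ne\varphi|_{\tau^{(\beta)}}$ (as functions pulled back to $\tau$); separable means $1$-separable. *)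

theory Defs
  imports "HOL-Analysis.Analysis"
begin

text \<open>A point of R^k is represented as a function nat => real vanishing at indices >= k;
  the topology is the product topology on nat => real, which on this subspace is the
  Euclidean topology of R^k.\<close>

definition rat_poly_cone_k :: "nat \<Rightarrow> (nat \<Rightarrow> real) set \<Rightarrow> bool" where
  "rat_poly_cone_k k C \<longleftrightarrow>
     (\<exists>V. finite V \<and> (\<forall>v\<in>V. (\<forall>i. v i \<in> \<int>) \<and> (\<forall>i\<ge>k. v i = 0)) \<and>
          C = {(\<lambda>i. \<Sum>v\<in>V. c v * v i) | c. \<forall>v. 0 \<le> c v})"

text \<open>Elements of M(sigma) are real functions on sigma; we represent them as functions
  on the whole type that vanish outside sigma (zero extension).\<close>

definition zext :: "'a set \<Rightarrow> ('a \<Rightarrow> real) \<Rightarrow> 'a \<Rightarrow> real" where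
  "zext s f = (\<lambda>x. if x \<in> s then f x else 0)"

definition evmap :: "('a \<Rightarrow> real) list \<Rightarrow> 'a \<Rightarrow> nat \<Rightarrow> real" where
  "evmap fs x = (\<lambda>i. if i < length fs then (fs ! i) x else 0)"

definition intcomb :: "'a set \<Rightarrow> ('a \<Rightarrow> real) list \<Rightarrow> (nat \<Rightarrow> int) \<Rightarrow> 'a \<Rightarrow> real" where
  "intcomb s fs c = zext s (\<lambda>x. \<Sum>i<length fs. of_int (c i) * (fs ! i) x)"

definition zbasis :: "'a set \<Rightarrow> ('a \<Rightarrow> real) set \<Rightarrow> ('a \<Rightarrow> real) list \<Rightarrow> bool" where
  "zbasis s M fs \<longleftrightarrow>
     M = range (intcomb s fs) \<and>
     (\<forall>c. (\<forall>x\<in>s. (\<Sum>i<length fs. of_int (c i) * (fs ! i) x) = 0) \<longrightarrow> (\<forall>i<length fs. c i = 0))"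

text \<open>Faces of a cone sigma of a cone complex: zero loci in sigma of elements of M(sigma)
  that are nonnegative on sigma (these are exactly the preimages under evaluation of the
  faces of the rational polyhedral cone, since faces of rational cones are cut out by
  integral supporting functionals).\<close>
definition cc_face :: "('a set \<Rightarrow> ('a \<Rightarrow> real) set) \<Rightarrow> 'a set \<Rightarrow> 'a set \<Rightarrow> bool" where
  "cc_face M \<sigma> \<tau> \<longleftrightarrow> (\<exists>m\<in>M \<sigma>. (\<forall>x\<in>\<sigma>. 0 \<le> m x) \<and> \<tau> = {x\<in>\<sigma>. m x = 0})"

definition cc_relint :: "('a set \<Rightarrow> ('a \<Rightarrow> real) set) \<Rightarrow> 'a set \<Rightarrow> 'a set" where
  "cc_relint M \<sigma> = {x\<in>\<sigma>. \<forall>\<tau>. cc_face M \<sigma> \<tau> \<and> x \<in> \<tau> \<longrightarrow> \<tau> = \<sigma>}"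

definition cone_complex ::
  "'a topology \<Rightarrow> 'a set set \<Rightarrow> ('a set \<Rightarrow> ('a \<Rightarrow> real) set) \<Rightarrow> bool" where
  "cone_complex X S M \<longleftrightarrow>
     finite S \<and>
     (\<forall>\<sigma>\<in>S. \<sigma> \<subseteq> topspace X \<and> closedin X \<sigma>) \<and>
     (\<forall>\<sigma>\<in>S. \<forall>m\<in>M \<sigma>. continuous_map (subtopology X \<sigma>) euclideanreal m) \<and>
     (\<forall>\<sigma>\<in>S. \<exists>fs C. zbasis \<sigma> (M \<sigma>) fs \<and> rat_poly_cone_k (length fs) C \<and>
          homeomorphic_map (subtopology X \<sigma>) (subtopology euclidean C) (evmap fs)) \<and>
     (\<forall>\<sigma>\<in>S. \<forall>\<tau>. cc_face M \<sigma> \<tau> \<longrightarrow> \<tau> \<in> S \<and> M \<tau> = zext \<tau> ` M \<sigma>) \<and>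
     (\<forall>x\<in>topspace X. \<exists>!\<sigma>. \<sigma> \<in> S \<and> x \<in> cc_relint M \<sigma>)"

definition cc_morphism ::
  "'a topology \<Rightarrow> 'a set set \<Rightarrow> ('a set \<Rightarrow> ('a \<Rightarrow> real) set) \<Rightarrow>
   'b topology \<Rightarrow> 'b set set \<Rightarrow> ('b set \<Rightarrow> ('b \<Rightarrow> real) set) \<Rightarrow> ('a \<Rightarrow> 'b) \<Rightarrow> bool" where
  "cc_morphism X S M Y T N f \<longleftrightarrow>
     continuous_map X Y f \<and>
     (\<forall>\<sigma>'\<in>S. \<exists>\<sigma>\<in>T. f ` \<sigma>' \<subseteq> \<sigma> \<and> (\<forall>m\<in>N \<sigma>. zext \<sigma>' (m \<circ> f) \<in> M \<sigma>'))"

definition cc_weight ::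
  "'a topology \<Rightarrow> 'a set set \<Rightarrow> ('a set \<Rightarrow> ('a \<Rightarrow> real) set) \<Rightarrow> ('a \<Rightarrow> nat) \<Rightarrow> bool" where
  "cc_weight X S M \<mu> \<longleftrightarrow>
     (\<forall>x\<in>topspace X. 0 < \<mu> x) \<and>
     (\<forall>\<sigma>\<in>S. \<forall>x\<in>cc_relint M \<sigma>. \<forall>y\<in>cc_relint M \<sigma>. \<mu> x = \<mu> y)"

definition trace :: "('a \<Rightarrow> 'b) \<Rightarrow> ('a \<Rightarrow> nat) \<Rightarrow> 'a set \<Rightarrow> 'b \<Rightarrow> nat" where
  "trace f \<mu> A y = (\<Sum>x\<in>{x\<in>A. f x = y}. \<mu> x)"

definition branched_covering ::
  "'a topology \<Rightarrow> 'a set set \<Rightarrow> ('a set \<Rightarrow> ('a \<Rightarrow> real) set) \<Rightarrow> ('a \<Rightarrow> nat) \<Rightarrow>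
   'b topology \<Rightarrow> 'b set set \<Rightarrow> ('b set \<Rightarrow> ('b \<Rightarrow> real) set) \<Rightarrow> ('a \<Rightarrow> 'b) \<Rightarrow> bool" where
  "branched_covering L SL LM \<mu> B SB MB \<pi> \<longleftrightarrow>
     cc_morphism L SL LM B SB MB \<pi> \<and>
     \<pi> ` topspace L = topspace B \<and>
     (\<forall>\<sigma>\<in>SL. \<exists>\<tau>\<in>SB. homeomorphic_map (subtopology L \<sigma>) (subtopology B \<tau>) \<pi>) \<and>
     (\<forall>U V. openin B U \<and> connectedin B U \<and>
            V \<in> connected_components_of (subtopology L {x\<in>topspace L. \<pi> x \<in> U}) \<longrightarrow>
            (\<forall>y\<in>U. \<forall>z\<in>U. trace \<pi> \<mu> V y = trace \<pi> \<mu> V z))"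

definition int_vec :: "real^'n \<Rightarrow> bool" where
  "int_vec v \<longleftrightarrow> (\<forall>i. v $ i \<in> \<int>)"

definition rat_poly_cone :: "(real^'n) set \<Rightarrow> bool" where
  "rat_poly_cone \<sigma> \<longleftrightarrow>
     (\<exists>V. finite V \<and> (\<forall>v\<in>V. int_vec v) \<and>
          \<sigma> = {(\<Sum>v\<in>V. c v *\<^sub>R v) | c. \<forall>v. 0 \<le> c v})"

definition strongly_convex :: "(real^'n) set \<Rightarrow> bool" where
  "strongly_convex \<sigma> \<longleftrightarrow> (\<forall>x. x \<in> \<sigma> \<and> - x \<in> \<sigma> \<longrightarrow> x = 0)"

definition cone_face :: "(real^'n) set \<Rightarrow> (real^'n) set \<Rightarrow> bool" where
  "cone_face \<sigma> \<tau> \<longleftrightarrow> (\<exists>u. (\<forall>x\<in>\<sigma>. 0 \<le> u \<bullet> x) \<and> \<tau> = {x\<in>\<sigma>. u \<bullet> x = 0})"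

definition fan :: "(real^'n) set set \<Rightarrow> bool" where
  "fan \<Sigma> \<longleftrightarrow>
     finite \<Sigma> \<and>
     (\<forall>\<sigma>\<in>\<Sigma>. rat_poly_cone \<sigma> \<and> strongly_convex \<sigma>) \<and>
     (\<forall>\<sigma>\<in>\<Sigma>. \<forall>\<tau>. cone_face \<sigma> \<tau> \<longrightarrow> \<tau> \<in> \<Sigma>) \<and>
     (\<forall>\<sigma>\<in>\<Sigma>. \<forall>\<sigma>'\<in>\<Sigma>. cone_face \<sigma> (\<sigma> \<inter> \<sigma>') \<and> cone_face \<sigma>' (\<sigma> \<inter> \<sigma>'))"

definition complete_fan :: "(real^'n) set set \<Rightarrow> bool" where
  "complete_fan \<Sigma> \<longleftrightarrow> fan \<Sigma> \<and> \<Union>\<Sigma> = UNIV"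

text \<open>The cone complex structure of (N_R, Sigma): M(sigma) = restrictions of M to sigma.\<close>
definition fanM :: "(real^'n) set \<Rightarrow> (real^'n \<Rightarrow> real) set" where
  "fanM \<sigma> = {zext \<sigma> (\<lambda>x. u \<bullet> x) | u. int_vec u}"

definition fan_cones_dim :: "(real^'n) set set \<Rightarrow> nat \<Rightarrow> (real^'n) set set" where
  "fan_cones_dim \<Sigma> k = {\<sigma>\<in>\<Sigma>. dim \<sigma> = k}"

definition trop_lag_ms ::
  "(real^'n) set set \<Rightarrow> nat \<Rightarrow> 'a topology \<Rightarrow> 'a set set \<Rightarrow> ('a set \<Rightarrow> ('a \<Rightarrow> real) set) \<Rightarrow>
   ('a \<Rightarrow> nat) \<Rightarrow> ('a \<Rightarrow> real^'n) \<Rightarrow> ('a \<Rightarrow> real) \<Rightarrow> bool" where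
  "trop_lag_ms \<Sigma> r L SL LM \<mu> \<pi> \<phi> \<longleftrightarrow>
     cone_complex L SL LM \<and> cc_weight L SL LM \<mu> \<and>
     branched_covering L SL LM \<mu> euclidean \<Sigma> fanM \<pi> \<and>
     (\<forall>y. trace \<pi> \<mu> (topspace L) y = r) \<and>
     continuous_map L euclideanreal \<phi> \<and>
     (\<forall>\<sigma>\<in>SL. zext \<sigma> \<phi> \<in> LM \<sigma>)"

definition k_separable ::
  "nat \<Rightarrow> (real^'n) set set \<Rightarrow> 'a topology \<Rightarrow> 'a set set \<Rightarrow>
   ('a \<Rightarrow> real^'n) \<Rightarrow> ('a \<Rightarrow> real) \<Rightarrow> bool" where
  "k_separable k \<Sigma> L SL \<pi> \<phi> \<longleftrightarrow>
     connected_space L \<and>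
     (\<forall>\<tau>\<in>fan_cones_dim \<Sigma> k. \<forall>\<tau>a\<in>SL. \<forall>\<tau>b\<in>SL.
        \<tau>a \<noteq> \<tau>b \<and> \<pi> ` \<tau>a = \<tau> \<and> \<pi> ` \<tau>b = \<tau> \<longrightarrow>
        \<not> (\<forall>x\<in>\<tau>a. \<forall>x'\<in>\<tau>b. \<pi> x = \<pi> x' \<longrightarrow> \<phi> x = \<phi> x'))"

definition separable ::
  "(real^'n) set set \<Rightarrow> 'a topology \<Rightarrow> 'a set set \<Rightarrow>
   ('a \<Rightarrow> real^'n) \<Rightarrow> ('a \<Rightarrow> real) \<Rightarrow> bool" where
  "separable = k_separable 1"

text \<open>ms_le ... L1 ... L2 means L1 <= L2 (witnessed by a surjective morphism L2 -> L1).\<close>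
definition ms_le ::
  "'b topology \<Rightarrow> 'b set set \<Rightarrow> ('b set \<Rightarrow> ('b \<Rightarrow> real) set) \<Rightarrow> ('b \<Rightarrow> nat) \<Rightarrow>
   ('b \<Rightarrow> real^'n) \<Rightarrow> ('b \<Rightarrow> real) \<Rightarrow>
   'a topology \<Rightarrow> 'a set set \<Rightarrow> ('a set \<Rightarrow> ('a \<Rightarrow> real) set) \<Rightarrow> ('a \<Rightarrow> nat) \<Rightarrow>
   ('a \<Rightarrow> real^'n) \<Rightarrow> ('a \<Rightarrow> real) \<Rightarrow> bool" where
  "ms_le L1 S1 LM1 \<mu>1 \<pi>1 \<phi>1 L2 S2 LM2 \<mu>2 \<pi>2 \<phi>2 \<longleftrightarrow>
     (\<exists>f. cc_morphism L2 S2 LM2 L1 S1 LM1 f \<and> f ` topspace L2 = topspace L1 \<and>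
          (\<forall>x\<in>topspace L2. \<pi>1 (f x) = \<pi>2 x) \<and>
          (\<forall>y\<in>topspace L1. trace f \<mu>2 (topspace L2) y = \<mu>1 y) \<and>
          (\<forall>x\<in>topspace L2. \<phi>1 (f x) = \<phi>2 x))"

text \<open>The relation ~_c between connected multi-sections of rank r over Sigma carried by
  the type 'a (a common lower bound is a quotient of either, hence may be taken on 'a).\<close>
definition sim_c ::
  "(real^'n) set set \<Rightarrow> nat \<Rightarrow>
   'a topology \<Rightarrow> 'a set set \<Rightarrow> ('a set \<Rightarrow> ('a \<Rightarrow> real) set) \<Rightarrow> ('a \<Rightarrow> nat) \<Rightarrow>
   ('a \<Rightarrow> real^'n) \<Rightarrow> ('a \<Rightarrow> real) \<Rightarrow>
   'a topology \<Rightarrow> 'a set set \<Rightarrow> ('a set \<Rightarrow> ('a \<Rightarrow> real) set) \<Rightarrow> ('a \<Rightarrow> nat) \<Rightarrow>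
   ('a \<Rightarrow> real^'n) \<Rightarrow> ('a \<Rightarrow> real) \<Rightarrow> bool" where
  "sim_c \<Sigma> r L1 S1 LM1 \<mu>1 \<pi>1 \<phi>1 L2 S2 LM2 \<mu>2 \<pi>2 \<phi>2 \<longleftrightarrow>
     trop_lag_ms \<Sigma> r L1 S1 LM1 \<mu>1 \<pi>1 \<phi>1 \<and> connected_space L1 \<and>
     trop_lag_ms \<Sigma> r L2 S2 LM2 \<mu>2 \<pi>2 \<phi>2 \<and> connected_space L2 \<and>
     (\<exists>(L::'a topology) S M \<mu> \<pi> \<phi>. trop_lag_ms \<Sigma> r L S M \<mu> \<pi> \<phi> \<and>
        ms_le L S M \<mu> \<pi> \<phi> L1 S1 LM1 \<mu>1 \<pi>1 \<phi>1 \<and> ms_le L S M \<mu> \<pi> \<phi> L2 S2 LM2 \<mu>2 \<pi>2 \<phi>2)"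

end

theory Submission
  imports Defs "HOL-Library.Function_Algebras"
begin

text \<open>Call a point of \<open>L\<close> skeletal if it lies in a cone whose image in the fan has dimension at
  most one, and glue two skeletal points with the same images under \<open>\<pi>\<close> and \<open>\<phi>\<close>.  As \<open>\<phi>\<close> is
  linear on cones, two cones over the same ray (or over the origin) that are glued at one relative
  interior point are glued entirely, so the cones of \<open>L\<close> embed into the quotient, which inherits
  the structure of a cone complex, the lattices spanned by the coordinates of \<open>\<pi>\<close> and \<open>\<phi>\<close>, the
  pushed-forward weight, \<open>\<pi>\<close> and \<open>\<phi>\<close>; the quotient map witnesses \<open>\<le>\<close>.  In the quotient, cones
  over a ray with the same \<open>\<phi>\<close> coincide, which is separability, and all points over the origin
  (where \<open>\<phi>\<close> vanishes) become one point lying in every cone, which makes it connected.\<close>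

section \<open>Subgroups of integer vectors are free\<close>

definition int_comb :: "(nat \<Rightarrow> int) list \<Rightarrow> (nat \<Rightarrow> int) \<Rightarrow> nat \<Rightarrow> int" where
  "int_comb hs c = (\<lambda>i. \<Sum>j<length hs. c j * (hs!j) i)"

definition int_subgroup :: "(nat \<Rightarrow> int) set \<Rightarrow> bool" where
  "int_subgroup H \<longleftrightarrow> 0 \<in> H \<and> (\<forall>a\<in>H. \<forall>b\<in>H. a + b \<in> H) \<and> (\<forall>a\<in>H. - a \<in> H)"

lemma int_subgroup_diff:
  "int_subgroup H \<Longrightarrow> a \<in> H \<Longrightarrow> b \<in> H \<Longrightarrow> a - b \<in> H"
  unfolding int_subgroup_def by (metis diff_conv_add_uminus)

lemma int_subgroup_scale:
  assumes H: "int_subgroup H" and h: "h \<in> H"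
  shows "(\<lambda>i. z * h i) \<in> H"
proof (induction z rule: int_induct[where k = 0])
  case base
  then show ?case using H by (simp add: int_subgroup_def zero_fun_def[symmetric])
next
  case (step1 z)
  have "(\<lambda>i. (z + 1) * h i) = (\<lambda>i. z * h i) + h" by (auto simp: algebra_simps)
  then show ?case using step1 H h by (simp add: int_subgroup_def)
next
  case (step2 z)
  have "(\<lambda>i. (z - 1) * h i) = (\<lambda>i. z * h i) - h" by (auto simp: algebra_simps)
  then show ?case using step2 H h by (simp add: int_subgroup_diff)
qed

lemma int_comb_snoc: "int_comb (hs @ [h]) c = int_comb hs c + (\<lambda>i. c (length hs) * h i)"
  by (simp add: int_comb_def fun_eq_iff nth_append)

lemma int_comb_cong: "(\<And>j. j < length hs \<Longrightarrow> c j = c' j) \<Longrightarrow> int_comb hs c = int_comb hs c'"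
  by (simp add: int_comb_def)

lemma int_comb_in_subgroup:
  assumes "int_subgroup H" "set hs \<subseteq> H"
  shows "int_comb hs c \<in> H"
  using assms(2)
proof (induction hs rule: rev_induct)
  case Nil
  then show ?case using assms(1) by (simp add: int_comb_def int_subgroup_def zero_fun_def[symmetric])
next
  case (snoc h hs)
  then have "int_comb hs c \<in> H" "(\<lambda>i. c (length hs) * h i) \<in> H"
    using int_subgroup_scale[OF assms(1)] by auto
  then show ?case using assms(1) unfolding int_comb_snoc int_subgroup_def by blast
qed

text \<open>The values of a coordinate on a subgroup form an ideal of \<open>\<int>\<close>, generated by its least
  positive element.\<close>

lemma int_subgroup_coordinate_generator:
  assumes H: "int_subgroup H" and h1: "h1 \<in> H" "h1 k \<noteq> 0"
  obtains h0 where "h0 \<in> H" "h0 k > 0" "\<And>h. h \<in> H \<Longrightarrow> h0 k dvd h k"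
proof -
  define P where "P = (\<lambda>n::nat. n > 0 \<and> (\<exists>h\<in>H. h k = int n))"
  have "P (nat \<bar>h1 k\<bar>)"
  proof (cases "h1 k > 0")
    case True
    then show ?thesis using h1 unfolding P_def by (intro conjI bexI[of _ h1]) auto
  next
    case False
    have "- h1 \<in> H" using h1 H unfolding int_subgroup_def by auto
    then show ?thesis using h1 False unfolding P_def by (intro conjI bexI[of _ "- h1"]) auto
  qed
  define d where "d = (LEAST n. P n)"
  have "P d" unfolding d_def by (rule LeastI) fact
  then obtain h0 where h0: "h0 \<in> H" "h0 k = int d" "d > 0" unfolding P_def by auto
  have "h0 k dvd h k" if h: "h \<in> H" for h
  proof -
    define m where "m = h k mod h0 k"
    define rest where "rest = h - (\<lambda>i. (h k div h0 k) * h0 i)"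
    have "rest \<in> H"
      unfolding rest_def using H h int_subgroup_scale[OF H h0(1)] by (rule int_subgroup_diff)
    moreover have "rest k = m"
      unfolding rest_def m_def by (simp add: minus_div_mult_eq_mod[symmetric] mult.commute)
    moreover have "0 \<le> m" "m < int d" using h0 unfolding m_def by auto
    ultimately have "m \<noteq> 0 \<Longrightarrow> P (nat m)" unfolding P_def by (auto intro!: bexI[of _ rest])
    moreover have "P (nat m) \<Longrightarrow> int d \<le> m"
      using Least_le[of P "nat m"] \<open>0 \<le> m\<close> unfolding d_def by linarith
    ultimately have "m = 0" using \<open>m < int d\<close> by linarith
    then show ?thesis unfolding m_def by (simp add: dvd_eq_mod_eq_0)
  qed
  then show ?thesis using that h0 by auto
qed

definition int_basis :: "(nat \<Rightarrow> int) set \<Rightarrow> (nat \<Rightarrow> int) list \<Rightarrow> bool" where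
  "int_basis H hs \<longleftrightarrow> set hs \<subseteq> H \<and> H = range (int_comb hs) \<and>
     (\<forall>c. int_comb hs c = 0 \<longrightarrow> (\<forall>j<length hs. c j = 0))"

lemma int_basis_snoc:
  assumes H: "int_subgroup H" and hs1: "int_basis {h\<in>H. h k = 0} hs1"
    and h0: "h0 \<in> H" "h0 k > 0" "\<And>h. h \<in> H \<Longrightarrow> h0 k dvd h k"
  shows "int_basis H (hs1 @ [h0])"
proof -
  have hs1': "set hs1 \<subseteq> H" "{h\<in>H. h k = 0} = range (int_comb hs1)"
    "\<forall>c. int_comb hs1 c = 0 \<longrightarrow> (\<forall>j<length hs1. c j = 0)"
    using hs1 unfolding int_basis_def by auto
  have "set (hs1 @ [h0]) \<subseteq> H" using hs1'(1) h0(1) by auto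
  moreover have "H \<subseteq> range (int_comb (hs1 @ [h0]))"
  proof
    fix h assume hH: "h \<in> H"
    obtain z where z: "h k = h0 k * z" using h0(3)[OF hH] by (auto elim: dvdE)
    have "h - (\<lambda>i. z * h0 i) \<in> {h\<in>H. h k = 0}"
      using int_subgroup_diff[OF H hH int_subgroup_scale[OF H h0(1)]] z by (auto simp: mult.commute)
    then obtain c where c: "h - (\<lambda>i. z * h0 i) = int_comb hs1 c" using hs1'(2) by auto
    have "int_comb hs1 (c(length hs1 := z)) = int_comb hs1 c" by (rule int_comb_cong) auto
    then have "int_comb (hs1 @ [h0]) (c(length hs1 := z)) = h"
      unfolding int_comb_snoc using c by (auto simp: fun_eq_iff algebra_simps)
    then show "h \<in> range (int_comb (hs1 @ [h0]))" by (metis rangeI)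
  qed
  moreover have "\<forall>j<length (hs1 @ [h0]). c j = 0" if z: "int_comb (hs1 @ [h0]) c = 0" for c
  proof -
    have "int_comb hs1 c k = 0" using hs1'(2) by auto
    then have "c (length hs1) = 0" using fun_cong[OF z, of k] h0(2) unfolding int_comb_snoc by simp
    moreover from this have "\<forall>j<length hs1. c j = 0"
      using z hs1'(3) unfolding int_comb_snoc by (simp add: fun_eq_iff)
    ultimately show ?thesis by (auto simp: less_Suc_eq)
  qed
  moreover have "range (int_comb (hs1 @ [h0])) \<subseteq> H"
    using int_comb_in_subgroup[OF H \<open>set (hs1 @ [h0]) \<subseteq> H\<close>] by blast
  ultimately show ?thesis unfolding int_basis_def by blast
qed

lemma int_subgroup_has_basis:
  assumes "int_subgroup H" "\<forall>h\<in>H. \<forall>i\<ge>k. h i = 0"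
  shows "\<exists>hs. int_basis H hs"
  using assms
proof (induction k arbitrary: H)
  case 0
  then have "H = {0}" unfolding int_subgroup_def by (auto simp: fun_eq_iff)
  then show ?case unfolding int_basis_def by (intro exI[of _ "[]"]) (auto simp: int_comb_def zero_fun_def)
next
  case (Suc k)
  have "int_subgroup {h\<in>H. h k = 0}" using Suc.prems(1) unfolding int_subgroup_def by auto
  moreover have "\<forall>h\<in>{h\<in>H. h k = 0}. \<forall>i\<ge>k. h i = 0"
  proof (intro ballI allI impI)
    fix h i assume "h \<in> {h\<in>H. h k = 0}" "k \<le> i"
    then show "h i = 0" using Suc.prems(2) by (cases "i = k") auto
  qed
  ultimately obtain hs1 where hs1: "int_basis {h\<in>H. h k = 0} hs1" using Suc.IH by blast
  show ?case
  proof (cases "\<forall>h\<in>H. h k = 0")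
    case True
    then have "{h\<in>H. h k = 0} = H" by auto
    then show ?thesis using hs1 by auto
  next
    case False
    then obtain h0 where "h0 \<in> H" "h0 k > 0" "\<And>h. h \<in> H \<Longrightarrow> h0 k dvd h k"
      using int_subgroup_coordinate_generator[OF Suc.prems(1)] by blast
    then show ?thesis using int_basis_snoc[OF Suc.prems(1) hs1] by blast
  qed
qed

section \<open>Finitely generated cones\<close>

definition cone_of :: "'v::real_vector set \<Rightarrow> 'v set" where
  "cone_of V = {(\<Sum>v\<in>V. c v *\<^sub>R v) | c. \<forall>v. 0 \<le> c v}"

lemma convex_cone_sum:
  assumes "convex_cone S" "finite I" "\<And>i. i \<in> I \<Longrightarrow> y i \<in> S"
  shows "(\<Sum>i\<in>I. y i) \<in> S"
  using assms(2,3)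
proof (induction I rule: finite_induct)
  case empty
  then show ?case using assms(1) by (simp add: convex_cone_contains_0)
next
  case (insert x F)
  then show ?case using assms(1) by (simp add: convex_cone_add)
qed

lemma convex_cone_cone_of: "convex_cone (cone_of V)"
  unfolding convex_cone_def
proof (intro conjI)
  show "cone_of V \<noteq> {}" unfolding cone_of_def by (auto intro!: exI[of _ "\<lambda>v. 0"])
  show "convex (cone_of V)"
    unfolding convex_def
  proof (intro ballI allI impI)
    fix x y and a b :: real
    assume "x \<in> cone_of V" "y \<in> cone_of V" and ab: "0 \<le> a" "0 \<le> b" "a + b = 1"
    then obtain c d where "x = (\<Sum>v\<in>V. c v *\<^sub>R v)" "\<forall>v. 0 \<le> c v"
      "y = (\<Sum>v\<in>V. d v *\<^sub>R v)" "\<forall>v. 0 \<le> d v"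
      unfolding cone_of_def by auto
    moreover from this have "a *\<^sub>R x + b *\<^sub>R y = (\<Sum>v\<in>V. (a * c v + b * d v) *\<^sub>R v)"
      by (simp add: scaleR_sum_right sum.distrib scaleR_add_left)
    ultimately show "a *\<^sub>R x + b *\<^sub>R y \<in> cone_of V"
      using ab unfolding cone_of_def by (auto intro!: exI[of _ "\<lambda>v. a * c v + b * d v"])
  qed
  show "conic (cone_of V)"
    unfolding conic_def
  proof (intro allI impI)
    fix x and t :: real assume "x \<in> cone_of V" "0 \<le> t"
    then obtain c where "x = (\<Sum>v\<in>V. c v *\<^sub>R v)" "\<forall>v. 0 \<le> c v" "0 \<le> t"
      unfolding cone_of_def by auto
    then show "t *\<^sub>R x \<in> cone_of V"
      unfolding cone_of_def by (auto simp: scaleR_sum_right intro!: exI[of _ "\<lambda>v. t * c v"])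
  qed
qed

lemma cone_of_generator:
  assumes "finite V" "w \<in> V"
  shows "w \<in> cone_of V"
proof -
  have "(\<Sum>v\<in>V. (if v = w then 1 else 0) *\<^sub>R v) = w"
    using assms by (simp add: if_distrib[of "\<lambda>t. t *\<^sub>R _"] cong: if_cong)
  then show ?thesis unfolding cone_of_def by (auto intro!: exI[of _ "\<lambda>v. if v = w then 1 else 0"])
qed

lemma cone_of_eq_convex_cone_hull:
  assumes "finite V"
  shows "cone_of V = convex_cone hull V"
proof
  show "convex_cone hull V \<subseteq> cone_of V"
    by (rule hull_minimal) (use cone_of_generator[OF assms] convex_cone_cone_of in auto)
  show "cone_of V \<subseteq> convex_cone hull V"
    unfolding cone_of_def
    by (auto intro!: convex_cone_sum[OF convex_cone_convex_cone_hull assms]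
             simp: convex_cone_hull_mul hull_inc)
qed

lemma cone_of_scaleR: "x \<in> cone_of V \<Longrightarrow> 0 \<le> t \<Longrightarrow> t *\<^sub>R x \<in> cone_of V"
  using convex_cone_cone_of by (metis conic_mul convex_cone_def)

lemma zero_in_cone_of: "0 \<in> cone_of V"
  using convex_cone_cone_of convex_cone_contains_0 by blast

lemma cone_of_sum:
  "finite I \<Longrightarrow> (\<And>i. i \<in> I \<Longrightarrow> y i \<in> cone_of V) \<Longrightarrow> (\<Sum>i\<in>I. y i) \<in> cone_of V"
  using convex_cone_sum[OF convex_cone_cone_of] by blast

lemma closed_cone_of: "finite (V :: 'v::euclidean_space set) \<Longrightarrow> closed (cone_of V)"
  by (simp add: cone_of_eq_convex_cone_hull closed_convex_cone_hull)

lemma convex_cone_of: "convex (cone_of V)"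
  using convex_cone_cone_of unfolding convex_cone_def by blast

lemma additive_homogeneous_sum:
  assumes add: "\<And>y1 y2. y1 \<in> K \<Longrightarrow> y2 \<in> K \<Longrightarrow> \<psi> (y1 + y2) = \<psi> y1 + \<psi> y2"
    and hom: "\<And>y a. y \<in> K \<Longrightarrow> 0 \<le> a \<Longrightarrow> \<psi> (a *\<^sub>R y) = a * \<psi> y"
    and K: "convex_cone K"
    and I: "finite I" "\<And>i. i \<in> I \<Longrightarrow> y i \<in> K" "\<And>i. i \<in> I \<Longrightarrow> 0 \<le> a i"
  shows "\<psi> (\<Sum>i\<in>I. a i *\<^sub>R y i) = (\<Sum>i\<in>I. a i * \<psi> (y i))"
  using I
proof (induction I rule: finite_induct)
  case empty
  have "0 \<in> K" using K convex_cone_contains_0 by blast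
  then show ?case using hom[of 0 0] by simp
next
  case (insert x F)
  have "a i *\<^sub>R y i \<in> K" if "i \<in> insert x F" for i
    using insert.prems that K by (meson conic_mul convex_cone_def)
  moreover have "(\<Sum>i\<in>F. a i *\<^sub>R y i) \<in> K"
    using insert calculation by (intro convex_cone_sum[OF K]) auto
  ultimately show ?case using insert add hom by simp
qed

text \<open>A generator of a cone that lies in the span of a set \<open>B\<close> of other generators is a
  difference of two elements of the cone built from \<open>B\<close>; so an additive positively homogeneous
  function agrees on it with every linear function that agrees with it on \<open>B\<close>.\<close>

lemma additive_homogeneous_eq_linear_on_span:
  assumes V: "finite V" and B: "B \<subseteq> V" and v: "v \<in> V" "v \<in> span B"
    and add: "\<And>y1 y2. y1 \<in> cone_of V \<Longrightarrow> y2 \<in> cone_of V \<Longrightarrow> \<psi> (y1 + y2) = \<psi> y1 + \<psi> y2"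
    and hom: "\<And>y a. y \<in> cone_of V \<Longrightarrow> 0 \<le> a \<Longrightarrow> \<psi> (a *\<^sub>R y) = a * \<psi> y"
    and g: "linear g" "\<And>b. b \<in> B \<Longrightarrow> g b = \<psi> b"
  shows "\<psi> v = g v"
proof -
  have fB: "finite B" using B V finite_subset by blast
  obtain r where r: "v = (\<Sum>b\<in>B. r b *\<^sub>R b)" using span_finite[OF fB] v(2) by auto
  define P where "P = {b\<in>B. r b > 0}"
  define N where "N = {b\<in>B. \<not> r b > 0}"
  have fin: "finite P" "finite N" using fB unfolding P_def N_def by auto
  have BPN: "B = P \<union> N" "P \<inter> N = {}" unfolding P_def N_def by auto
  have inK: "b \<in> cone_of V" if "b \<in> B" for b using that B cone_of_generator[OF V] by auto
  have S: "\<psi> (\<Sum>b\<in>I. a b *\<^sub>R b) = (\<Sum>b\<in>I. a b * \<psi> b)"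
    if "I \<subseteq> B" "\<And>b. b \<in> I \<Longrightarrow> 0 \<le> a b" for I a
    using additive_homogeneous_sum[OF add hom convex_cone_cone_of, where y="\<lambda>b. b" and I=I]
      that fB inK finite_subset by blast
  have "(- r b) *\<^sub>R b \<in> cone_of V" if "b \<in> N" for b
    using that by (intro cone_of_scaleR inK) (auto simp: N_def)
  then have sN: "(\<Sum>b\<in>N. (- r b) *\<^sub>R b) \<in> cone_of V" by (rule cone_of_sum[OF fin(2)])
  have "v + (\<Sum>b\<in>N. (- r b) *\<^sub>R b) = (\<Sum>b\<in>P. r b *\<^sub>R b)"
    unfolding r BPN(1) using BPN(2) fin by (simp add: sum.union_disjoint sum_negf)
  then have "\<psi> v + (\<Sum>b\<in>N. (- r b) * \<psi> b) = (\<Sum>b\<in>P. r b * \<psi> b)"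
    using add[OF cone_of_generator[OF V v(1)] sN] S[of N "\<lambda>b. - r b"] S[of P r]
    unfolding P_def N_def by auto
  then have "\<psi> v = (\<Sum>b\<in>B. r b * \<psi> b)"
    unfolding BPN(1) using BPN(2) fin by (simp add: sum.union_disjoint sum_negf)
  also have "\<dots> = g v" unfolding r using g by (simp add: linear_sum linear_scale)
  finally show ?thesis .
qed

lemma additive_homogeneous_on_cone_is_inner:
  fixes \<psi> :: "'v::euclidean_space \<Rightarrow> real"
  assumes V: "finite V"
    and add: "\<And>y1 y2. y1 \<in> cone_of V \<Longrightarrow> y2 \<in> cone_of V \<Longrightarrow> \<psi> (y1 + y2) = \<psi> y1 + \<psi> y2"
    and hom: "\<And>y a. y \<in> cone_of V \<Longrightarrow> 0 \<le> a \<Longrightarrow> \<psi> (a *\<^sub>R y) = a * \<psi> y"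
  shows "\<exists>u. \<forall>y\<in>cone_of V. \<psi> y = u \<bullet> y"
proof -
  obtain B where B: "B \<subseteq> V" "independent B" "V \<subseteq> span B" by (rule maximal_independent_subset)
  obtain g where g: "linear g" "\<forall>x\<in>B. g x = \<psi> x" using linear_independent_extend[OF B(2)] by blast
  have gV: "\<psi> v = g v" if "v \<in> V" for v
    using additive_homogeneous_eq_linear_on_span[OF V B(1) that _ add hom g(1)] that B(3) g(2) by blast
  have "\<psi> y = adjoint g 1 \<bullet> y" if y: "y \<in> cone_of V" for y
  proof -
    obtain c where c: "y = (\<Sum>v\<in>V. c v *\<^sub>R v)" "\<forall>v. 0 \<le> c v"
      using y unfolding cone_of_def by auto
    have "\<psi> y = (\<Sum>v\<in>V. c v * g v)"
      unfolding c using additive_homogeneous_sum[OF add hom convex_cone_cone_of V]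
        cone_of_generator[OF V] c(2) gV by simp
    also have "\<dots> = g y" unfolding c using g(1) by (simp add: linear_sum linear_scale)
    also have "\<dots> = adjoint g 1 \<bullet> y" using adjoint_works[OF g(1), of y 1] by (simp add: inner_commute)
    finally show ?thesis .
  qed
  then show ?thesis by blast
qed

section \<open>Faces of rational cones\<close>

definition rat_vec :: "real^'n \<Rightarrow> bool" where
  "rat_vec x \<longleftrightarrow> (\<forall>i. x$i \<in> \<rat>)"

lemma int_vec_imp_rat_vec: "int_vec v \<Longrightarrow> rat_vec v"
  unfolding int_vec_def rat_vec_def using Ints_subset_Rats by blast

lemma rat_vec_inner: "rat_vec a \<Longrightarrow> rat_vec b \<Longrightarrow> a \<bullet> b \<in> \<rat>"
  unfolding rat_vec_def inner_vec_def by (auto intro!: Rats_sum)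

definition rational_projection :: "(real^'n) set \<Rightarrow> (real^'n \<Rightarrow> real^'n) \<Rightarrow> bool" where
  "rational_projection A P \<longleftrightarrow> linear P \<and> (\<forall>x. rat_vec x \<longrightarrow> rat_vec (P x)) \<and>
     (\<forall>x. \<forall>a\<in>A. P x \<bullet> a = 0) \<and> (\<forall>x. (\<forall>a\<in>A. x \<bullet> a = 0) \<longrightarrow> P x = x)"

lemma linear_inner_eq_0_if_axes:
  fixes P :: "real^'n \<Rightarrow> real^'n"
  assumes "linear P" "\<And>i. P (axis i 1) \<bullet> v = 0"
  shows "P x \<bullet> v = 0"
proof -
  have "P x = (\<Sum>i\<in>UNIV. (x$i) *\<^sub>R P (axis i 1))"
    using assms(1) by (metis (no_types, lifting) basis_expansion linear_scale linear_sum
        scalar_mult_eq_scaleR sum.cong)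
  then show ?thesis using assms(2) by (simp add: inner_sum_left)
qed

text \<open>Correct \<open>P\<close> by a multiple of one of its columns not orthogonal to \<open>v\<close>; columns of \<open>P\<close>
  are rational, so rationality is preserved.\<close>

lemma rational_projection_insert:
  assumes P: "rational_projection A P" and v: "rat_vec v"
  shows "\<exists>P'. rational_projection (insert v A) P'"
proof (cases "\<forall>i. P (axis i 1) \<bullet> v = 0")
  case True
  then have "P x \<bullet> v = 0" for x
    using P linear_inner_eq_0_if_axes unfolding rational_projection_def by blast
  then show ?thesis using P unfolding rational_projection_def by (intro exI[of _ P]) auto
next
  case False
  then obtain i where i: "P (axis i 1) \<bullet> v \<noteq> 0" by auto
  define s where "s = P (axis i 1)"
  have lin: "linear P" and rat: "\<And>x. rat_vec x \<Longrightarrow> rat_vec (P x)"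
    using P unfolding rational_projection_def by auto
  have rs: "rat_vec s" unfolding s_def using rat by (simp add: rat_vec_def axis_def)
  define P' where "P' = (\<lambda>x. P x - ((P x \<bullet> v) / (s \<bullet> v)) *\<^sub>R s)"
  have "linear P'"
    unfolding P'_def linear_iff
    by (simp add: linear_add[OF lin] linear_scale[OF lin] inner_add_left add_divide_distrib
                  scaleR_add_left algebra_simps)
  moreover have "rat_vec (P' x)" if "rat_vec x" for x
  proof -
    have "rat_vec (P x)" using rat that .
    moreover from this have "(P x \<bullet> v) / (s \<bullet> v) \<in> \<rat>"
      using rat_vec_inner rs v by (intro Rats_divide) auto
    moreover have "(P' x)$j = (P x)$j - ((P x \<bullet> v) / (s \<bullet> v)) * s$j" for j
      by (simp add: P'_def)
    ultimately show ?thesis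
      using rs unfolding rat_vec_def by (simp only:) (blast intro: Rats_diff Rats_mult)
  qed
  moreover have "\<forall>x. \<forall>a\<in>insert v A. P' x \<bullet> a = 0"
    using P i unfolding P'_def s_def rational_projection_def by (auto simp: inner_diff_left)
  moreover have "\<forall>x. (\<forall>a\<in>insert v A. x \<bullet> a = 0) \<longrightarrow> P' x = x"
    using P unfolding P'_def rational_projection_def by auto
  ultimately show ?thesis unfolding rational_projection_def by blast
qed

lemma rational_projection_exists:
  "finite A \<Longrightarrow> \<forall>a\<in>A. rat_vec a \<Longrightarrow> \<exists>P. rational_projection A P"
proof (induction A rule: finite_induct)
  case empty
  show ?case unfolding rational_projection_def by (intro exI[of _ "\<lambda>x. x"]) (auto simp: linear_iff)
next
  case (insert v A)
  then show ?case using rational_projection_insert by blast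
qed

lemma rat_vec_approx:
  fixes u :: "real^'n"
  assumes "e > 0"
  shows "\<exists>q. rat_vec q \<and> dist q u < e"
proof -
  define d where "d = e / real CARD('n)"
  have "d > 0" unfolding d_def using assms by simp
  then have "\<forall>i. \<exists>r\<in>\<rat>. u$i < r \<and> r < u$i + d" using Rats_dense_in_real by (metis less_add_same_cancel1)
  then obtain q where q: "\<forall>i. q i \<in> \<rat> \<and> u$i < q i \<and> q i < u$i + d" by metis
  have "dist (\<chi> i. q i) u \<le> (\<Sum>i\<in>UNIV. \<bar>((\<chi> i. q i) - u)$i\<bar>)"
    unfolding dist_norm by (rule norm_le_l1_cart)
  also have "\<dots> < (\<Sum>i\<in>(UNIV::'n set). d)"
  proof (rule sum_strict_mono)
    fix i :: 'n
    have "u$i < q i" "q i < u$i + d" using q by auto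
    then show "\<bar>((\<chi> i. q i) - u)$i\<bar> < d" by (simp add: abs_less_iff)
  qed auto
  also have "\<dots> = e" unfolding d_def by simp
  finally show ?thesis using q unfolding rat_vec_def by (intro exI[of _ "\<chi> i. q i"]) auto
qed

lemma rat_vec_integral_multiple:
  assumes "rat_vec x"
  shows "\<exists>D::int. D > 0 \<and> int_vec (of_int D *\<^sub>R x)"
proof -
  have "\<forall>i. \<exists>a b. b > 0 \<and> x$i = of_int a / of_int (b::int)"
    using assms unfolding rat_vec_def by (metis Rats_cases')
  then obtain a b where ab: "\<forall>i. b i > 0 \<and> x$i = of_int (a i) / of_int (b i :: int)" by metis
  define D where "D = (\<Prod>i\<in>UNIV. b i)"
  have "(of_int D *\<^sub>R x)$i \<in> \<int>" for i
  proof -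
    have "b i dvd D" unfolding D_def by (simp add: dvd_prodI)
    then obtain k where k: "D = b i * k" by (elim dvdE)
    have "(of_int D *\<^sub>R x)$i = of_int (k * a i)" using k ab[rule_format, of i] by (simp add: field_simps)
    then show ?thesis by simp
  qed
  moreover have "D > 0" unfolding D_def using ab by (simp add: prod_pos)
  ultimately show ?thesis unfolding int_vec_def by blast
qed

lemma inner_cone_combination:
  fixes w :: "real^'n"
  assumes V: "finite V" and c: "\<forall>v. 0 \<le> c v"
    and w: "\<forall>v\<in>V0. w \<bullet> v = 0" "\<forall>v\<in>V-V0. w \<bullet> v > 0"
  shows "0 \<le> w \<bullet> (\<Sum>v\<in>V. c v *\<^sub>R v)"
    and "w \<bullet> (\<Sum>v\<in>V. c v *\<^sub>R v) = 0 \<longleftrightarrow> (\<forall>v\<in>V-V0. c v = 0)"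
proof -
  have e: "w \<bullet> (\<Sum>v\<in>V. c v *\<^sub>R v) = (\<Sum>v\<in>V. c v * (w \<bullet> v))" by (simp add: inner_sum_right)
  have nn: "\<forall>v\<in>V. 0 \<le> c v * (w \<bullet> v)"
    using c w by (metis DiffI less_eq_real_def mult_nonneg_nonneg mult_zero_right)
  show "0 \<le> w \<bullet> (\<Sum>v\<in>V. c v *\<^sub>R v)" unfolding e using nn by (simp add: sum_nonneg)
  have "w \<bullet> (\<Sum>v\<in>V. c v *\<^sub>R v) = 0 \<longleftrightarrow> (\<forall>v\<in>V. c v * (w \<bullet> v) = 0)"
    unfolding e using nn by (simp add: sum_nonneg_eq_0_iff[OF V])
  also have "\<dots> \<longleftrightarrow> (\<forall>v\<in>V-V0. c v = 0)" using w by (metis DiffD1 DiffI less_irrefl mult_eq_0_iff)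
  finally show "w \<bullet> (\<Sum>v\<in>V. c v *\<^sub>R v) = 0 \<longleftrightarrow> (\<forall>v\<in>V-V0. c v = 0)" .
qed

text \<open>A face of a rational cone is cut out by an integral functional: project \<open>u\<close> rationally
  onto the orthogonal complement of the generators it kills, perturb to a nearby rational vector
  (positivity on the other generators is an open condition) and clear denominators.\<close>

lemma face_of_rational_cone_integral:
  fixes V :: "(real^'n) set" and u :: "real^'n"
  assumes V: "finite V" "\<forall>v\<in>V. int_vec v" and u: "\<forall>y\<in>cone_of V. 0 \<le> u \<bullet> y"
  shows "\<exists>u'. int_vec u' \<and> (\<forall>y\<in>cone_of V. 0 \<le> u' \<bullet> y) \<and>
              (\<forall>y\<in>cone_of V. u' \<bullet> y = 0 \<longleftrightarrow> u \<bullet> y = 0)"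
proof -
  define V0 where "V0 = {v\<in>V. u \<bullet> v = 0}"
  have u0: "\<forall>v\<in>V0. u \<bullet> v = 0" unfolding V0_def by auto
  have u1: "\<forall>v\<in>V-V0. u \<bullet> v > 0" using u cone_of_generator[OF V(1)] unfolding V0_def
    by (metis (mono_tags, lifting) DiffE less_eq_real_def mem_Collect_eq)
  obtain P where P: "rational_projection V0 P"
    using rational_projection_exists[of V0] V int_vec_imp_rat_vec unfolding V0_def by auto
  have Pu: "P u = u" using P u0 unfolding rational_projection_def by (simp add: inner_commute)
  define Ob where "Ob = (\<Inter>v\<in>V-V0. {q. P q \<bullet> v > 0})"
  have "continuous_on UNIV P"
    using P linear_continuous_on linear_conv_bounded_linear unfolding rational_projection_def by blast
  then have "open Ob" unfolding Ob_def using V(1)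
    by (intro open_INT) (auto intro!: open_Collect_less continuous_intros continuous_on_inner)
  moreover have "u \<in> Ob" unfolding Ob_def using Pu u1 by auto
  ultimately obtain e where e: "e > 0" "ball u e \<subseteq> Ob" using open_contains_ball by blast
  obtain q where q: "rat_vec q" "dist q u < e" using rat_vec_approx[OF e(1)] by blast
  have w: "rat_vec (P q)" "\<forall>v\<in>V0. P q \<bullet> v = 0" "\<forall>v\<in>V-V0. P q \<bullet> v > 0"
    using P q e unfolding Ob_def rational_projection_def by (auto simp: dist_commute subset_iff)
  obtain D::int where D: "D > 0" "int_vec (of_int D *\<^sub>R P q)" using rat_vec_integral_multiple[OF w(1)] by blast
  define u' where "u' = of_int D *\<^sub>R P q"
  have u'0: "\<forall>v\<in>V0. u' \<bullet> v = 0" and u'1: "\<forall>v\<in>V-V0. u' \<bullet> v > 0"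
    using w D unfolding u'_def by auto
  show ?thesis
  proof (intro exI[of _ u'] conjI ballI)
    fix y assume "y \<in> cone_of V"
    then obtain c where c: "y = (\<Sum>v\<in>V. c v *\<^sub>R v)" "\<forall>v. 0 \<le> c v" unfolding cone_of_def by auto
    show "0 \<le> u' \<bullet> y" unfolding c(1) using inner_cone_combination(1)[OF V(1) c(2) u'0 u'1] .
    show "u' \<bullet> y = 0 \<longleftrightarrow> u \<bullet> y = 0" unfolding c(1)
      using inner_cone_combination(2)[OF V(1) c(2) u'0 u'1] inner_cone_combination(2)[OF V(1) c(2) u0 u1]
      by simp
  qed (use D u'_def in simp)
qed

lemma strongly_convex_cone_of_zero_notin_hull:
  assumes V: "finite V" and sc: "strongly_convex (cone_of V)"
  shows "0 \<notin> convex hull (V - {0})"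
proof
  define V' where "V' = V - {0}"
  have fV': "finite V'" using V unfolding V'_def by auto
  have inV: "x \<in> cone_of V" if "x \<in> V'" for x using that cone_of_generator[OF V] unfolding V'_def by auto
  assume "0 \<in> convex hull (V - {0})"
  then obtain a where a: "\<forall>x\<in>V'. 0 \<le> a x" "sum a V' = 1" "(\<Sum>x\<in>V'. a x *\<^sub>R x) = 0"
    using convex_hull_finite[OF fV'] unfolding V'_def by auto
  have "\<exists>w\<in>V'. a w > 0"
  proof (rule ccontr)
    assume "\<not> (\<exists>w\<in>V'. a w > 0)"
    then have "\<forall>x\<in>V'. a x = 0" using a(1) by force
    then show False using a(2) by simp
  qed
  then obtain w where w: "w \<in> V'" "a w > 0" by blast
  have "a w *\<^sub>R w + (\<Sum>x\<in>V'-{w}. a x *\<^sub>R x) = 0" using a(3) w(1) fV' by (simp add: sum.remove)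
  then have "- (a w *\<^sub>R w) = (\<Sum>x\<in>V'-{w}. a x *\<^sub>R x)" by (rule minus_unique)
  moreover have "(\<Sum>x\<in>V'-{w}. a x *\<^sub>R x) \<in> cone_of V"
    using fV' a(1) inV by (intro cone_of_sum) (auto intro: cone_of_scaleR)
  moreover have "a w *\<^sub>R w \<in> cone_of V" using cone_of_scaleR[OF inV[OF w(1)]] w(2) by simp
  ultimately have "a w *\<^sub>R w = 0" using sc unfolding strongly_convex_def by metis
  then show False using w unfolding V'_def by auto
qed

lemma strongly_convex_cone_of_positive_functional:
  fixes V :: "(real^'n) set"
  assumes V: "finite V" and sc: "strongly_convex (cone_of V)"
  shows "\<exists>u. \<forall>y\<in>cone_of V. y \<noteq> 0 \<longrightarrow> 0 < u \<bullet> y"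
proof (cases "V - {0} = {}")
  case True
  then have "\<forall>y\<in>cone_of V. y = 0" unfolding cone_of_def by (auto intro!: sum.neutral)
  then show ?thesis by auto
next
  case False
  have "convex (convex hull (V - {0}))" "closed (convex hull (V - {0}))"
    using V by (auto simp: convex_convex_hull finite_imp_compact compact_convex_hull compact_imp_closed)
  then obtain a b where ab: "0 < b" "\<forall>x\<in>convex hull (V - {0}). b < a \<bullet> x"
    using separating_hyperplane_closed_0 strongly_convex_cone_of_zero_notin_hull[OF V sc] by blast
  have pos: "\<forall>v\<in>V-{0}. a \<bullet> v > 0"
  proof
    fix v assume "v \<in> V - {0}"
    then have "v \<in> convex hull (V - {0})" by (rule hull_inc)
    then show "a \<bullet> v > 0" using ab by force
  qed
  show ?thesis
  proof (intro exI[of _ a] ballI impI)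
    fix y assume y: "y \<in> cone_of V" "y \<noteq> 0"
    then obtain c where c: "y = (\<Sum>v\<in>V. c v *\<^sub>R v)" "\<forall>v. 0 \<le> c v" unfolding cone_of_def by auto
    have p0: "\<forall>v\<in>{0}. a \<bullet> v = 0" by simp
    have "a \<bullet> y \<noteq> 0"
    proof
      assume "a \<bullet> y = 0"
      then have "\<forall>v\<in>V-{0}. c v = 0" unfolding c using inner_cone_combination(2)[OF V c(2) p0 pos] by simp
      then have "y = 0" unfolding c by (metis (no_types, lifting) DiffI scaleR_eq_0_iff singletonD sum.neutral)
      then show False using y by simp
    qed
    then show "0 < a \<bullet> y" using inner_cone_combination(1)[OF V c(2) p0 pos] c by simp
  qed
qed

lemma dim_le_one_collinear:
  fixes S :: "(real^'n) set"
  assumes "dim S \<le> 1" "y1 \<in> S" "y1 \<noteq> 0" "y2 \<in> S"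
  shows "\<exists>t. y2 = t *\<^sub>R y1"
proof (rule ccontr)
  assume "\<not> ?thesis"
  then have "y2 \<notin> span {y1}" by (auto simp: span_singleton)
  then have "y2 \<noteq> y1" "independent {y2, y1}" using span_base assms(3) by (auto simp: independent_insert)
  moreover from this have "card {y2, y1} \<le> dim S" using assms by (intro independent_card_le_dim) auto
  ultimately show False using assms(1) by simp
qed

section \<open>Quotient topology\<close>

definition quotient_topology :: "'a topology \<Rightarrow> ('a \<Rightarrow> 'b) \<Rightarrow> 'b topology" where
  "quotient_topology X f =
     topology (\<lambda>U. U \<subseteq> f ` topspace X \<and> openin X {x\<in>topspace X. f x \<in> U})"

lemma istopology_quotient:
  "istopology (\<lambda>U. U \<subseteq> f ` topspace X \<and> openin X {x\<in>topspace X. f x \<in> U})"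
  unfolding istopology_def
proof (rule conjI; intro allI impI ballI)
  fix S T assume "S \<subseteq> f ` topspace X \<and> openin X {x\<in>topspace X. f x \<in> S}"
    "T \<subseteq> f ` topspace X \<and> openin X {x\<in>topspace X. f x \<in> T}"
  moreover have "{x\<in>topspace X. f x \<in> S \<inter> T} = {x\<in>topspace X. f x \<in> S} \<inter> {x\<in>topspace X. f x \<in> T}"
    by auto
  ultimately show "S \<inter> T \<subseteq> f ` topspace X \<and> openin X {x\<in>topspace X. f x \<in> S \<inter> T}" by auto
next
  fix K assume "\<forall>U\<in>K. U \<subseteq> f ` topspace X \<and> openin X {x\<in>topspace X. f x \<in> U}"
  moreover have "{x\<in>topspace X. f x \<in> \<Union>K} = (\<Union>U\<in>K. {x\<in>topspace X. f x \<in> U})" by auto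
  ultimately show "\<Union>K \<subseteq> f ` topspace X \<and> openin X {x\<in>topspace X. f x \<in> \<Union>K}" by auto
qed

lemma openin_quotient_topology:
  "openin (quotient_topology X f) U \<longleftrightarrow> U \<subseteq> f ` topspace X \<and> openin X {x\<in>topspace X. f x \<in> U}"
  by (simp only: quotient_topology_def topology_inverse'[OF istopology_quotient])

lemma topspace_quotient_topology: "topspace (quotient_topology X f) = f ` topspace X"
proof -
  have "openin (quotient_topology X f) (f ` topspace X)"
  proof -
    have "{x\<in>topspace X. f x \<in> f ` topspace X} = topspace X" by auto
    then show ?thesis unfolding openin_quotient_topology by auto
  qed
  then have "f ` topspace X \<subseteq> topspace (quotient_topology X f)" by (rule openin_subset)
  moreover have "topspace (quotient_topology X f) \<subseteq> f ` topspace X"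
    unfolding topspace_def openin_quotient_topology by auto
  ultimately show ?thesis by auto
qed

lemma closedin_quotient_topology:
  "closedin (quotient_topology X f) S \<longleftrightarrow> S \<subseteq> f ` topspace X \<and> closedin X {x\<in>topspace X. f x \<in> S}"
proof -
  have e: "{x\<in>topspace X. f x \<in> f ` topspace X - S} = topspace X - {x\<in>topspace X. f x \<in> S}" by auto
  show ?thesis
    unfolding closedin_def topspace_quotient_topology openin_quotient_topology e by auto
qed

lemma continuous_map_quotient_topology: "continuous_map X (quotient_topology X f) f"
  unfolding continuous_map_def topspace_quotient_topology openin_quotient_topology by auto

lemma continuous_map_from_quotient_topology:
  assumes "continuous_map X Y h" "\<And>x. x \<in> topspace X \<Longrightarrow> g (f x) = h x"
  shows "continuous_map (quotient_topology X f) Y g"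
  unfolding continuous_map_def topspace_quotient_topology openin_quotient_topology
proof (intro conjI allI impI)
  show "g \<in> f ` topspace X \<rightarrow> topspace Y"
    using assms continuous_map_image_subset_topspace by fastforce
  fix U assume U: "openin Y U"
  show "{y\<in>f ` topspace X. g y \<in> U} \<subseteq> f ` topspace X" by auto
  have "{x\<in>topspace X. f x \<in> {y\<in>f ` topspace X. g y \<in> U}} = {x\<in>topspace X. g (f x) \<in> U}"
    by blast
  also have "\<dots> = {x\<in>topspace X. h x \<in> U}" using assms(2) by auto
  finally show "openin X {x\<in>topspace X. f x \<in> {y\<in>f ` topspace X. g y \<in> U}}"
    using U assms(1) by (auto simp: continuous_map_def)
qed

section \<open>Integral bases and evaluation cones\<close>

definition lincomb :: "('a \<Rightarrow> real) list \<Rightarrow> (nat \<Rightarrow> int) \<Rightarrow> 'a \<Rightarrow> real" where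
  "lincomb fs c = (\<lambda>x. \<Sum>i<length fs. of_int (c i) * (fs!i) x)"

lemma intcomb_eq_zext_lincomb: "intcomb s fs c = zext s (lincomb fs c)"
  unfolding intcomb_def lincomb_def ..

lemma zext_eq_iff: "zext s f = zext s g \<longleftrightarrow> (\<forall>x\<in>s. f x = g x)"
  unfolding zext_def fun_eq_iff by auto

lemma zbasis_zext_iff:
  "zbasis s (zext s ` F) gs \<longleftrightarrow>
     (\<forall>d. \<exists>g\<in>F. \<forall>x\<in>s. lincomb gs d x = g x) \<and> (\<forall>g\<in>F. \<exists>d. \<forall>x\<in>s. g x = lincomb gs d x) \<and>
     (\<forall>d. (\<forall>x\<in>s. lincomb gs d x = 0) \<longrightarrow> (\<forall>j<length gs. d j = 0))"
proof -
  have "zext s ` F = range (\<lambda>d. zext s (lincomb gs d)) \<longleftrightarrow>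
      (\<forall>d. \<exists>g\<in>F. \<forall>x\<in>s. lincomb gs d x = g x) \<and> (\<forall>g\<in>F. \<exists>d. \<forall>x\<in>s. g x = lincomb gs d x)"
    by (auto simp: image_iff zext_eq_iff set_eq_iff) (metis zext_eq_iff)+
  then show ?thesis unfolding zbasis_def intcomb_eq_zext_lincomb by (simp add: lincomb_def)
qed

lemma zbasis_image:
  assumes zb: "zbasis A (zext A ` F) gs"
    and inv: "\<And>x g. x \<in> A \<Longrightarrow> g \<in> F \<union> set gs \<Longrightarrow> g (f x) = g x"
  shows "zbasis (f ` A) (zext (f ` A) ` F) gs"
proof -
  have "lincomb gs d (f x) = lincomb gs d x" if "x \<in> A" for d x
    unfolding lincomb_def by (intro sum.cong refl) (simp add: inv[OF that] nth_mem)
  moreover have "g (f x) = g x" if "x \<in> A" "g \<in> F" for g x using inv that by blast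
  ultimately show ?thesis using zb unfolding zbasis_zext_iff by (simp add: ball_simps) metis
qed

lemma zbasis_coefficients:
  assumes "zbasis s M fs" "m \<in> M"
  obtains c where "\<forall>i\<ge>length fs. c i = 0" "\<And>x. x \<in> s \<Longrightarrow> m x = lincomb fs c x"
proof -
  obtain c where "\<And>x. x \<in> s \<Longrightarrow> m x = lincomb fs c x"
    using assms unfolding zbasis_def intcomb_eq_zext_lincomb zext_def by auto
  moreover have "lincomb fs (\<lambda>i. if i < length fs then c i else 0) = lincomb fs c"
    unfolding lincomb_def by simp
  ultimately show ?thesis using that[of "\<lambda>i. if i < length fs then c i else 0"] by simp
qed

lemma zbasis_independent:
  "zbasis s M fs \<Longrightarrow> \<forall>x\<in>s. lincomb fs c x = 0 \<Longrightarrow> \<forall>i<length fs. c i = 0"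
  unfolding zbasis_def lincomb_def by blast

definition coeff_group :: "'a set \<Rightarrow> ('a \<Rightarrow> real) list \<Rightarrow> ('a \<Rightarrow> real) set \<Rightarrow> (nat \<Rightarrow> int) set" where
  "coeff_group s fs F = {c. (\<forall>i\<ge>length fs. c i = 0) \<and> (\<exists>g\<in>F. \<forall>x\<in>s. lincomb fs c x = g x)}"

lemma lincomb_add: "lincomb fs (a + b) = lincomb fs a + lincomb fs b"
  and lincomb_uminus: "lincomb fs (- a) = - lincomb fs a"
  and lincomb_zero: "lincomb fs 0 = 0"
  unfolding lincomb_def by (auto simp: fun_eq_iff sum.distrib distrib_right sum_negf)

lemma int_subgroup_coeff_group:
  assumes F: "0 \<in> F" "\<And>a b. a \<in> F \<Longrightarrow> b \<in> F \<Longrightarrow> a + b \<in> F" "\<And>a. a \<in> F \<Longrightarrow> - a \<in> F"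
  shows "int_subgroup (coeff_group s fs F)"
  unfolding int_subgroup_def
proof (intro conjI ballI)
  show "0 \<in> coeff_group s fs F"
    using F(1) unfolding coeff_group_def by (auto simp: lincomb_zero intro!: bexI[of _ 0])
  fix a b assume "a \<in> coeff_group s fs F" "b \<in> coeff_group s fs F"
  then obtain ga gb where ab: "\<forall>i\<ge>length fs. a i = 0" "\<forall>i\<ge>length fs. b i = 0" "ga \<in> F" "gb \<in> F"
    "\<forall>x\<in>s. lincomb fs a x = ga x" "\<forall>x\<in>s. lincomb fs b x = gb x"
    unfolding coeff_group_def by blast
  then show "a + b \<in> coeff_group s fs F"
    unfolding coeff_group_def using F(2) by (auto simp: lincomb_add intro!: bexI[of _ "ga + gb"])
  show "- a \<in> coeff_group s fs F"
    using ab F(3) unfolding coeff_group_def by (auto simp: lincomb_uminus intro!: bexI[of _ "- ga"])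
qed

lemma lincomb_int_comb:
  "lincomb fs (int_comb hs d) x = (\<Sum>j<length hs. of_int (d j) * lincomb fs (hs!j) x)"
  unfolding lincomb_def int_comb_def of_int_sum of_int_mult sum_distrib_right sum_distrib_left
  by (subst sum.swap) (simp add: mult_ac)

text \<open>The basis of the subgroup is read off from a basis of its coefficient vectors.\<close>

lemma zbasis_of_subgroup:
  assumes zb: "zbasis s M fs"
    and F: "zext s ` F \<subseteq> M" "0 \<in> F" "\<And>a b. a \<in> F \<Longrightarrow> b \<in> F \<Longrightarrow> a + b \<in> F"
      "\<And>a. a \<in> F \<Longrightarrow> - a \<in> F"
  obtains gs Mx where "zbasis s (zext s ` F) gs" "set gs \<subseteq> F"
    "\<And>j x. j < length gs \<Longrightarrow> x \<in> s \<Longrightarrow> (gs!j) x = lincomb fs (Mx j) x"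
proof -
  define H where "H = coeff_group s fs F"
  have "\<forall>h\<in>H. \<forall>i\<ge>length fs. h i = 0" unfolding H_def coeff_group_def by blast
  then obtain hs where "int_basis H hs"
    using int_subgroup_has_basis int_subgroup_coeff_group[OF F(2-4)] unfolding H_def by metis
  then have hs: "set hs \<subseteq> H" "H = range (int_comb hs)"
    "\<forall>d. int_comb hs d = 0 \<longrightarrow> (\<forall>j<length hs. d j = 0)"
    unfolding int_basis_def by auto
  define rep where "rep c = (SOME g. g \<in> F \<and> (\<forall>x\<in>s. lincomb fs c x = g x))" for c
  have rep: "rep c \<in> F \<and> (\<forall>x\<in>s. lincomb fs c x = rep c x)" if "c \<in> H" for c
    using someI_ex[of "\<lambda>g. g \<in> F \<and> (\<forall>x\<in>s. lincomb fs c x = g x)"] that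
    unfolding H_def coeff_group_def rep_def by blast
  define gs where "gs = map rep hs"
  have gs_nth: "(gs!j) x = lincomb fs (hs!j) x" if "j < length gs" "x \<in> s" for j x
    using rep[of "hs!j"] hs(1) that unfolding gs_def by (auto simp: nth_mem subsetD)
  have gs: "lincomb gs d x = lincomb fs (int_comb hs d) x" if "x \<in> s" for d x
    unfolding lincomb_int_comb using gs_nth[OF _ that] by (simp add: lincomb_def gs_def)
  have "\<exists>g\<in>F. \<forall>x\<in>s. lincomb gs d x = g x" for d
    using rep[of "int_comb hs d"] hs(2) gs by auto
  moreover have "\<exists>d. \<forall>x\<in>s. g x = lincomb gs d x" if "g \<in> F" for g
  proof -
    have "zext s g \<in> M" using F(1) that by blast
    then obtain c where c: "\<forall>i\<ge>length fs. c i = 0" "\<And>x. x \<in> s \<Longrightarrow> zext s g x = lincomb fs c x"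
      using zbasis_coefficients[OF zb] by blast
    then have "\<forall>x\<in>s. g x = lincomb fs c x" unfolding zext_def by simp
    moreover from this have "c \<in> H"
      unfolding H_def coeff_group_def using c(1) that by (auto intro!: bexI[of _ g])
    ultimately show ?thesis using hs(2) gs by auto
  qed
  moreover have "\<forall>j<length gs. d j = 0" if "\<forall>x\<in>s. lincomb gs d x = 0" for d
  proof -
    have "\<forall>i<length fs. int_comb hs d i = 0" using zbasis_independent[OF zb] gs that by simp
    moreover have "\<forall>i\<ge>length fs. int_comb hs d i = 0" using hs(2) unfolding H_def coeff_group_def by blast
    ultimately have "int_comb hs d = 0" by (auto simp: fun_eq_iff not_less[symmetric])
    then show ?thesis using hs(3) unfolding gs_def by simp
  qed
  ultimately have "zbasis s (zext s ` F) gs" unfolding zbasis_zext_iff by blast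
  moreover have "set gs \<subseteq> F" using rep hs(1) unfolding gs_def by auto
  ultimately show ?thesis using that gs_nth by blast
qed

definition int_matrix_map :: "nat \<Rightarrow> nat \<Rightarrow> (nat \<Rightarrow> nat \<Rightarrow> int) \<Rightarrow> (nat \<Rightarrow> real) \<Rightarrow> nat \<Rightarrow> real" where
  "int_matrix_map r k Mx v = (\<lambda>j. if j < r then \<Sum>i<k. of_int (Mx j i) * v i else 0)"

lemma int_matrix_map_comb:
  "int_matrix_map r k Mx (\<lambda>i. \<Sum>v\<in>V. c v * v i) = (\<lambda>j. \<Sum>v\<in>V. c v * int_matrix_map r k Mx v j)"
  unfolding int_matrix_map_def
  by (auto simp: fun_eq_iff sum_distrib_left algebra_simps intro: sum.swap)

lemma image_nonneg_combinations:
  fixes A :: "(nat \<Rightarrow> real) \<Rightarrow> nat \<Rightarrow> real"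
  assumes V: "finite V" and A: "\<And>c. A (\<lambda>i. \<Sum>v\<in>V. c v * v i) = (\<lambda>j. \<Sum>v\<in>V. c v * A v j)"
  shows "A ` {(\<lambda>i. \<Sum>v\<in>V. c v * v i) | c. \<forall>v. 0 \<le> c v} =
           {(\<lambda>j. \<Sum>w\<in>A ` V. c w * w j) | c. \<forall>w. 0 \<le> c w}"
proof (intro equalityI subsetI)
  fix x assume "x \<in> A ` {(\<lambda>i. \<Sum>v\<in>V. c v * v i) | c. \<forall>v. 0 \<le> c v}"
  then obtain c where c: "x = (\<lambda>j. \<Sum>v\<in>V. c v * A v j)" "\<forall>v. 0 \<le> c v" using A by auto
  have "x j = (\<Sum>w\<in>A ` V. (\<Sum>v\<in>{v\<in>V. A v = w}. c v) * w j)" for j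
    unfolding c(1) by (subst sum.image_gen[OF V]) (auto intro!: sum.cong simp: sum_distrib_right)
  moreover have "\<forall>w. 0 \<le> (\<Sum>v\<in>{v\<in>V. A v = w}. c v)" using c(2) by (simp add: sum_nonneg)
  ultimately show "x \<in> {(\<lambda>j. \<Sum>w\<in>A ` V. c w * w j) | c. \<forall>w. 0 \<le> c w}" by fastforce
next
  fix x assume "x \<in> {(\<lambda>j. \<Sum>w\<in>A ` V. c w * w j) | c. \<forall>w. 0 \<le> c w}"
  then obtain c' where c': "x = (\<lambda>j. \<Sum>w\<in>A ` V. c' w * w j)" "\<forall>w. 0 \<le> c' w" by auto
  define c where "c = (\<lambda>v. c' (A v) / real (card {v'\<in>V. A v' = A v}))"
  have fiber: "(\<Sum>v\<in>{v\<in>V. A v = w}. c v * A v j) = c' w * w j" if "w \<in> A ` V" for w j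
  proof -
    have "finite {v\<in>V. A v = w}" "{v\<in>V. A v = w} \<noteq> {}" using V that by auto
    moreover have "(\<Sum>v\<in>{v\<in>V. A v = w}. c v * A v j) =
        (\<Sum>v\<in>{v\<in>V. A v = w}. c' w / real (card {v'\<in>V. A v' = w}) * w j)"
      unfolding c_def by (rule sum.cong) auto
    ultimately show ?thesis by (simp add: card_gt_0_iff)
  qed
  have "A (\<lambda>i. \<Sum>v\<in>V. c v * v i) j = x j" for j
  proof -
    have "A (\<lambda>i. \<Sum>v\<in>V. c v * v i) j = (\<Sum>w\<in>A ` V. \<Sum>v\<in>{v\<in>V. A v = w}. c v * A v j)"
      unfolding A by (rule sum.image_gen[OF V])
    also have "\<dots> = x j" unfolding c'(1) using fiber by (intro sum.cong) auto
    finally show ?thesis .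
  qed
  then have "A (\<lambda>i. \<Sum>v\<in>V. c v * v i) = x" by (rule ext)
  moreover have "\<forall>v. 0 \<le> c v" unfolding c_def using c'(2) by simp
  ultimately show "x \<in> A ` {(\<lambda>i. \<Sum>v\<in>V. c v * v i) | c. \<forall>v. 0 \<le> c v}" by blast
qed

lemma rat_poly_cone_k_int_matrix_image:
  assumes "rat_poly_cone_k k C"
  shows "rat_poly_cone_k r (int_matrix_map r k Mx ` C)"
proof -
  obtain V where V: "finite V" "\<forall>v\<in>V. (\<forall>i. v i \<in> \<int>) \<and> (\<forall>i\<ge>k. v i = 0)"
    "C = {(\<lambda>i. \<Sum>v\<in>V. c v * v i) | c. \<forall>v. 0 \<le> c v}"
    using assms unfolding rat_poly_cone_k_def by blast
  have "\<forall>w\<in>int_matrix_map r k Mx ` V. (\<forall>i. w i \<in> \<int>) \<and> (\<forall>i\<ge>r. w i = 0)"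
    using V(2) unfolding int_matrix_map_def by (auto intro!: Ints_sum Ints_mult)
  then show ?thesis
    unfolding rat_poly_cone_k_def V(3) image_nonneg_combinations[OF V(1) int_matrix_map_comb]
    using V(1) by blast
qed

lemma evmap_int_matrix_map:
  assumes "\<And>j. j < length gs \<Longrightarrow> (gs!j) x = lincomb fs (Mx j) x"
  shows "evmap gs x = int_matrix_map (length gs) (length fs) Mx (evmap fs x)"
  using assms unfolding evmap_def int_matrix_map_def lincomb_def by (auto simp: fun_eq_iff)

lemma homeomorphic_map_factor:
  assumes p: "homeomorphic_map (subtopology X S) (subtopology Y T) p"
    and e: "continuous_map (subtopology X S) Z e"
    and B: "continuous_map Z Y B" "\<And>x. x \<in> S \<Longrightarrow> B (e x) = p x"
    and S: "S \<subseteq> topspace X"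
  shows "homeomorphic_map (subtopology X S) (subtopology Z (e ` S)) e"
proof -
  obtain g where g: "homeomorphic_maps (subtopology X S) (subtopology Y T) p g"
    using p homeomorphic_map_maps by blast
  have tS: "topspace (subtopology X S) = S" using S by auto
  have pT: "p ` S \<subseteq> T"
    using homeomorphic_imp_surjective_map[OF p] tS by auto
  have "continuous_map (subtopology Z (e ` S)) (subtopology Y T) B"
    using B pT by (intro continuous_map_into_subtopology continuous_map_from_subtopology) auto
  then have "continuous_map (subtopology Z (e ` S)) (subtopology X S) (g \<circ> B)"
    using g unfolding homeomorphic_maps_def by (blast intro: continuous_map_compose)
  moreover have "continuous_map (subtopology X S) (subtopology Z (e ` S)) e"
    using e tS by (intro continuous_map_into_subtopology) auto
  moreover have "g (B (e x)) = x" if "x \<in> S" for x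
    using g B(2) that tS unfolding homeomorphic_maps_def by simp
  ultimately have "homeomorphic_maps (subtopology X S) (subtopology Z (e ` S)) e (g \<circ> B)"
    unfolding homeomorphic_maps_def using tS by auto
  then show ?thesis using homeomorphic_map_maps by blast
qed

lemma rat_poly_cone_k_add:
  assumes "rat_poly_cone_k k C" "a \<in> C" "b \<in> C"
  shows "(\<lambda>i. a i + b i) \<in> C"
proof -
  obtain V where V: "C = {(\<lambda>i. \<Sum>v\<in>V. c v * v i) | c. \<forall>v. 0 \<le> c v}"
    using assms(1) unfolding rat_poly_cone_k_def by blast
  obtain c d where "a = (\<lambda>i. \<Sum>v\<in>V. c v * v i)" "\<forall>v. 0 \<le> c v"
    "b = (\<lambda>i. \<Sum>v\<in>V. d v * v i)" "\<forall>v. 0 \<le> d v"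
    using assms(2,3) V by auto
  then show ?thesis
    unfolding V by (auto simp: sum.distrib algebra_simps intro!: exI[of _ "\<lambda>v. c v + d v"])
qed

lemma rat_poly_cone_k_scale:
  assumes "rat_poly_cone_k k C" "a \<in> C" "0 \<le> t"
  shows "(\<lambda>i. t * a i) \<in> C"
proof -
  obtain V where V: "C = {(\<lambda>i. \<Sum>v\<in>V. c v * v i) | c. \<forall>v. 0 \<le> c v}"
    using assms(1) unfolding rat_poly_cone_k_def by blast
  obtain c where "a = (\<lambda>i. \<Sum>v\<in>V. c v * v i)" "\<forall>v. 0 \<le> c v" using assms(2) V by auto
  then show ?thesis
    unfolding V using assms(3) by (auto simp: sum_distrib_left algebra_simps intro!: exI[of _ "\<lambda>v. t * c v"])
qed

lemma zbasis_eval_add: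
  assumes "zbasis s M fs" "m \<in> M" "x1 \<in> s" "x2 \<in> s" "x3 \<in> s"
    and "evmap fs x3 = (\<lambda>i. evmap fs x1 i + evmap fs x2 i)"
  shows "m x3 = m x1 + m x2"
proof -
  obtain c where "\<forall>i\<ge>length fs. c i = 0" "\<And>x. x \<in> s \<Longrightarrow> m x = lincomb fs c x"
    by (rule zbasis_coefficients[OF assms(1,2)]) blast
  moreover have "(fs!i) x3 = (fs!i) x1 + (fs!i) x2" if "i < length fs" for i
    using fun_cong[OF assms(6), of i] that unfolding evmap_def by simp
  ultimately show ?thesis using assms(3-5) by (simp add: lincomb_def sum.distrib algebra_simps)
qed

lemma zbasis_eval_scale:
  assumes "zbasis s M fs" "m \<in> M" "x1 \<in> s" "x3 \<in> s"
    and "evmap fs x3 = (\<lambda>i. t * evmap fs x1 i)"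
  shows "m x3 = t * m x1"
proof -
  obtain c where "\<forall>i\<ge>length fs. c i = 0" "\<And>x. x \<in> s \<Longrightarrow> m x = lincomb fs c x"
    by (rule zbasis_coefficients[OF assms(1,2)]) blast
  moreover have "(fs!i) x3 = t * (fs!i) x1" if "i < length fs" for i
    using fun_cong[OF assms(5), of i] that unfolding evmap_def by simp
  ultimately show ?thesis using assms(3,4) by (simp add: lincomb_def sum_distrib_left algebra_simps)
qed

lemma trace_Union_disjoint:
  assumes "finite Ks" "pairwise disjnt Ks" "\<And>K. K \<in> Ks \<Longrightarrow> finite {x\<in>K. f x = w}"
  shows "trace f \<mu> (\<Union>Ks) w = (\<Sum>K\<in>Ks. trace f \<mu> K w)"
proof -
  have "{x\<in>\<Union>Ks. f x = w} = (\<Union>K\<in>Ks. {x\<in>K. f x = w})" by auto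
  moreover have "{x\<in>K1. f x = w} \<inter> {x\<in>K2. f x = w} = {}" if "K1 \<in> Ks" "K2 \<in> Ks" "K1 \<noteq> K2" for K1 K2
    using assms(2) that unfolding pairwise_def disjnt_def by blast
  ultimately show ?thesis unfolding trace_def using assms(1,3) by (simp add: sum.UNION_disjoint)
qed

section \<open>Tropical Lagrangian multi-sections over a complete fan\<close>

definition face_relint :: "(real^'n) set \<Rightarrow> (real^'n) set" where
  "face_relint \<tau> = {y\<in>\<tau>. \<forall>F. cone_face \<tau> F \<and> y \<in> F \<longrightarrow> F = \<tau>}"

definition comb_pi_phi :: "('a \<Rightarrow> real^'n) \<Rightarrow> ('a \<Rightarrow> real) \<Rightarrow> real^'n \<Rightarrow> int \<Rightarrow> 'a \<Rightarrow> real" where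
  "comb_pi_phi \<pi> \<phi> u k = (\<lambda>x. u \<bullet> \<pi> x + of_int k * \<phi> x)"

lemma int_vec_axis: "int_vec (axis i 1)"
  unfolding int_vec_def axis_def by auto

locale tropical_multisection =
  fixes \<Sigma> :: "(real^'n) set set" and r :: nat and L :: "'a topology" and SL :: "'a set set"
    and LM :: "'a set \<Rightarrow> ('a \<Rightarrow> real) set" and \<mu> :: "'a \<Rightarrow> nat" and \<pi> :: "'a \<Rightarrow> real^'n"
    and \<phi> :: "'a \<Rightarrow> real"
  assumes complete: "complete_fan \<Sigma>" and multisection: "trop_lag_ms \<Sigma> r L SL LM \<mu> \<pi> \<phi>"
begin

lemma cone_complex: "cone_complex L SL LM"
  and weight: "cc_weight L SL LM \<mu>"
  and covering: "branched_covering L SL LM \<mu> euclidean \<Sigma> fanM \<pi>"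
  and trace_rank: "trace \<pi> \<mu> (topspace L) y = r"
  and continuous_phi: "continuous_map L euclideanreal \<phi>"
  and phi_in_LM: "\<sigma> \<in> SL \<Longrightarrow> zext \<sigma> \<phi> \<in> LM \<sigma>"
  using multisection unfolding trop_lag_ms_def by blast+

lemma fan_strongly_convex: "\<tau> \<in> \<Sigma> \<Longrightarrow> strongly_convex \<tau>"
  and fan_inter_face: "\<tau> \<in> \<Sigma> \<Longrightarrow> \<tau>' \<in> \<Sigma> \<Longrightarrow> cone_face \<tau> (\<tau> \<inter> \<tau>')"
  using complete unfolding complete_fan_def fan_def by blast+

lemma fan_cone: "\<tau> \<in> \<Sigma> \<Longrightarrow> \<exists>V. finite V \<and> (\<forall>v\<in>V. int_vec v) \<and> \<tau> = cone_of V"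
  using complete unfolding complete_fan_def fan_def rat_poly_cone_def cone_of_def by blast

lemma SL_finite: "finite SL"
  using cone_complex by (simp add: cone_complex_def)

lemma SL_subset: "\<sigma> \<in> SL \<Longrightarrow> \<sigma> \<subseteq> topspace L"
  using cone_complex by (simp add: cone_complex_def)

lemma SL_closedin: "\<sigma> \<in> SL \<Longrightarrow> closedin L \<sigma>"
  using cone_complex by (simp add: cone_complex_def)

lemma SL_basis: "\<sigma> \<in> SL \<Longrightarrow> \<exists>fs C. zbasis \<sigma> (LM \<sigma>) fs \<and> rat_poly_cone_k (length fs) C \<and>
     homeomorphic_map (subtopology L \<sigma>) (subtopology euclidean C) (evmap fs)"
  using cone_complex by (simp add: cone_complex_def)

lemma SL_face: "\<sigma> \<in> SL \<Longrightarrow> cc_face LM \<sigma> \<tau> \<Longrightarrow> \<tau> \<in> SL"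
  using cone_complex unfolding cone_complex_def by blast

lemma SL_relint: "x \<in> topspace L \<Longrightarrow> \<exists>!\<sigma>. \<sigma> \<in> SL \<and> x \<in> cc_relint LM \<sigma>"
  using cone_complex by (simp add: cone_complex_def)

lemma topspace_eq_Union_SL: "topspace L = \<Union>SL"
  using SL_relint SL_subset unfolding cc_relint_def by blast

lemma mu_pos: "x \<in> topspace L \<Longrightarrow> 0 < \<mu> x"
  and mu_relint: "\<sigma> \<in> SL \<Longrightarrow> x \<in> cc_relint LM \<sigma> \<Longrightarrow> y \<in> cc_relint LM \<sigma> \<Longrightarrow> \<mu> x = \<mu> y"
  using weight unfolding cc_weight_def by blast+

lemma pi_morphism: "cc_morphism L SL LM euclidean \<Sigma> fanM \<pi>"
  and pi_surj: "\<pi> ` topspace L = UNIV"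
  and pi_trace_locally_constant: "openin euclidean U \<Longrightarrow> connectedin euclidean U \<Longrightarrow>
     V \<in> connected_components_of (subtopology L {x\<in>topspace L. \<pi> x \<in> U}) \<Longrightarrow> y \<in> U \<Longrightarrow> z \<in> U \<Longrightarrow>
     trace \<pi> \<mu> V y = trace \<pi> \<mu> V z"
  using covering unfolding branched_covering_def topspace_euclidean by blast+

lemma continuous_pi: "continuous_map L euclidean \<pi>"
  using pi_morphism unfolding cc_morphism_def by blast

lemma pi_cone: "\<sigma> \<in> SL \<Longrightarrow> \<pi> ` \<sigma> \<in> \<Sigma>"
  and pi_homeomorphic: "\<sigma> \<in> SL \<Longrightarrow> homeomorphic_map (subtopology L \<sigma>) (subtopology euclidean (\<pi> ` \<sigma>)) \<pi>"
proof -
  assume \<sigma>: "\<sigma> \<in> SL"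
  then obtain \<tau> where \<tau>: "\<tau> \<in> \<Sigma>" "homeomorphic_map (subtopology L \<sigma>) (subtopology euclidean \<tau>) \<pi>"
    using covering unfolding branched_covering_def by blast
  moreover have "\<pi> ` \<sigma> = \<tau>"
    using homeomorphic_imp_surjective_map[OF \<tau>(2)] SL_subset[OF \<sigma>] by (simp add: Int_absorb1)
  ultimately show "\<pi> ` \<sigma> \<in> \<Sigma>" "homeomorphic_map (subtopology L \<sigma>) (subtopology euclidean (\<pi> ` \<sigma>)) \<pi>"
    by auto
qed

lemma inj_on_pi: "\<sigma> \<in> SL \<Longrightarrow> inj_on \<pi> \<sigma>"
  using homeomorphic_imp_injective_map[OF pi_homeomorphic] SL_subset by (simp add: Int_absorb1)

lemma pi_cone_of: "\<sigma> \<in> SL \<Longrightarrow> \<exists>V. finite V \<and> (\<forall>v\<in>V. int_vec v) \<and> \<pi> ` \<sigma> = cone_of V"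
  using fan_cone pi_cone by blast

lemma pi_inverse:
  assumes "\<sigma> \<in> SL"
  obtains g where "continuous_map (subtopology euclidean (\<pi> ` \<sigma>)) (subtopology L \<sigma>) g"
    "\<And>x. x \<in> \<sigma> \<Longrightarrow> g (\<pi> x) = x" "\<And>y. y \<in> \<pi> ` \<sigma> \<Longrightarrow> \<pi> (g y) = y" "\<And>y. y \<in> \<pi> ` \<sigma> \<Longrightarrow> g y \<in> \<sigma>"
proof -
  obtain g where g: "homeomorphic_maps (subtopology L \<sigma>) (subtopology euclidean (\<pi> ` \<sigma>)) \<pi> g"
    using pi_homeomorphic[OF assms] homeomorphic_map_maps by blast
  have "topspace (subtopology L \<sigma>) = \<sigma>" using SL_subset[OF assms] by (simp add: Int_absorb1)
  moreover note continuous_map_image_subset_topspace[of _ _ g]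
  ultimately show ?thesis using g that unfolding homeomorphic_maps_def by fastforce
qed

lemma inner_pi_in_LM:
  assumes "\<sigma> \<in> SL" "int_vec u"
  shows "zext \<sigma> (\<lambda>x. u \<bullet> \<pi> x) \<in> LM \<sigma>"
proof -
  obtain \<tau> where \<tau>: "\<pi> ` \<sigma> \<subseteq> \<tau>" "\<forall>m\<in>fanM \<tau>. zext \<sigma> (m \<circ> \<pi>) \<in> LM \<sigma>"
    using pi_morphism assms(1) unfolding cc_morphism_def by blast
  have "zext \<tau> (\<lambda>x. u \<bullet> x) \<in> fanM \<tau>" unfolding fanM_def using assms(2) by blast
  moreover have "zext \<sigma> (zext \<tau> (\<lambda>x. u \<bullet> x) \<circ> \<pi>) = zext \<sigma> (\<lambda>x. u \<bullet> \<pi> x)"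
    using \<tau>(1) unfolding zext_def by (auto simp: fun_eq_iff)
  ultimately show ?thesis using \<tau>(2) by metis
qed

lemma comb_pi_phi_in_LM:
  assumes "\<sigma> \<in> SL" "int_vec u"
  shows "zext \<sigma> (comb_pi_phi \<pi> \<phi> u k) \<in> LM \<sigma>"
proof -
  obtain fs where zb: "zbasis \<sigma> (LM \<sigma>) fs" using SL_basis[OF assms(1)] by blast
  then have M: "LM \<sigma> = range (intcomb \<sigma> fs)" unfolding zbasis_def by blast
  obtain c1 where c1: "\<forall>i\<ge>length fs. c1 i = 0"
    "\<And>x. x \<in> \<sigma> \<Longrightarrow> zext \<sigma> (\<lambda>x. u \<bullet> \<pi> x) x = lincomb fs c1 x"
    by (rule zbasis_coefficients[OF zb inner_pi_in_LM[OF assms]]) blast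
  obtain c2 where c2: "\<forall>i\<ge>length fs. c2 i = 0" "\<And>x. x \<in> \<sigma> \<Longrightarrow> zext \<sigma> \<phi> x = lincomb fs c2 x"
    by (rule zbasis_coefficients[OF zb phi_in_LM[OF assms(1)]]) blast
  have "zext \<sigma> (comb_pi_phi \<pi> \<phi> u k) = intcomb \<sigma> fs (\<lambda>i. c1 i + k * c2 i)"
    using c1(2) c2(2) unfolding intcomb_def zext_def comb_pi_phi_def lincomb_def
    by (auto simp: fun_eq_iff sum.distrib sum_distrib_left algebra_simps)
  then show ?thesis using M by simp
qed

text \<open>Through the evaluation homeomorphism a cone of \<open>L\<close> is a convex cone on which both \<open>\<pi>\<close>
  and every \<open>m \<in> M(\<sigma>)\<close> are additive and positively homogeneous.\<close>

lemma cone_add_point: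
  assumes \<sigma>: "\<sigma> \<in> SL" and m: "m \<in> LM \<sigma>" and x: "x1 \<in> \<sigma>" "x2 \<in> \<sigma>"
  shows "\<exists>x3\<in>\<sigma>. \<pi> x3 = \<pi> x1 + \<pi> x2 \<and> m x3 = m x1 + m x2"
proof -
  obtain fs C where zb: "zbasis \<sigma> (LM \<sigma>) fs" and C: "rat_poly_cone_k (length fs) C"
    and hm: "homeomorphic_map (subtopology L \<sigma>) (subtopology euclidean C) (evmap fs)"
    using SL_basis[OF \<sigma>] by blast
  have img: "evmap fs ` \<sigma> = C"
    using homeomorphic_imp_surjective_map[OF hm] SL_subset[OF \<sigma>] by (simp add: Int_absorb1)
  moreover have "(\<lambda>i. evmap fs x1 i + evmap fs x2 i) \<in> C" using rat_poly_cone_k_add[OF C] img x by blast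
  ultimately obtain x3 where x3: "x3 \<in> \<sigma>" "evmap fs x3 = (\<lambda>i. evmap fs x1 i + evmap fs x2 i)"
    by force
  have "(\<pi> x3)$j = (\<pi> x1)$j + (\<pi> x2)$j" for j
    using zbasis_eval_add[OF zb inner_pi_in_LM[OF \<sigma> int_vec_axis] x x3(1) x3(2)] x x3(1)
    by (simp add: zext_def inner_axis')
  then show ?thesis
    using zbasis_eval_add[OF zb m x x3(1) x3(2)] x3(1) by (auto simp: vec_eq_iff)
qed

lemma cone_scale_point:
  assumes \<sigma>: "\<sigma> \<in> SL" and m: "m \<in> LM \<sigma>" and x: "x1 \<in> \<sigma>" and t: "0 \<le> t"
  shows "\<exists>x3\<in>\<sigma>. \<pi> x3 = t *\<^sub>R \<pi> x1 \<and> m x3 = t * m x1"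
proof -
  obtain fs C where zb: "zbasis \<sigma> (LM \<sigma>) fs" and C: "rat_poly_cone_k (length fs) C"
    and hm: "homeomorphic_map (subtopology L \<sigma>) (subtopology euclidean C) (evmap fs)"
    using SL_basis[OF \<sigma>] by blast
  have img: "evmap fs ` \<sigma> = C"
    using homeomorphic_imp_surjective_map[OF hm] SL_subset[OF \<sigma>] by (simp add: Int_absorb1)
  moreover have "(\<lambda>i. t * evmap fs x1 i) \<in> C" using rat_poly_cone_k_scale[OF C _ t] img x by blast
  ultimately obtain x3 where x3: "x3 \<in> \<sigma>" "evmap fs x3 = (\<lambda>i. t * evmap fs x1 i)" by force
  have "(\<pi> x3)$j = t * (\<pi> x1)$j" for j
    using zbasis_eval_scale[OF zb inner_pi_in_LM[OF \<sigma> int_vec_axis] x x3(1) x3(2)] x x3(1)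
    by (simp add: zext_def inner_axis')
  then show ?thesis
    using zbasis_eval_scale[OF zb m x x3(1) x3(2)] x3(1) by (auto simp: vec_eq_iff)
qed

lemma LM_linear_in_pi:
  assumes \<sigma>: "\<sigma> \<in> SL" and m: "m \<in> LM \<sigma>"
  shows "\<exists>w. \<forall>x\<in>\<sigma>. m x = w \<bullet> \<pi> x"
proof -
  define \<psi> where "\<psi> = (\<lambda>y. m (inv_into \<sigma> \<pi> y))"
  have \<psi>: "\<psi> (\<pi> x) = m x" if "x \<in> \<sigma>" for x
    unfolding \<psi>_def using inv_into_f_f[OF inj_on_pi[OF \<sigma>] that] by simp
  obtain V where V: "finite V" "\<pi> ` \<sigma> = cone_of V" using pi_cone_of[OF \<sigma>] by blast
  have "\<exists>w. \<forall>y\<in>cone_of V. \<psi> y = w \<bullet> y"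
  proof (rule additive_homogeneous_on_cone_is_inner[OF V(1)])
    fix y1 y2 assume "y1 \<in> cone_of V" "y2 \<in> cone_of V"
    then obtain x1 x2 where "x1 \<in> \<sigma>" "x2 \<in> \<sigma>" "y1 = \<pi> x1" "y2 = \<pi> x2" using V(2) by (metis imageE)
    then show "\<psi> (y1 + y2) = \<psi> y1 + \<psi> y2" using cone_add_point[OF \<sigma> m] \<psi> by metis
  next
    fix y and a :: real assume "y \<in> cone_of V" "0 \<le> a"
    then obtain x1 where "x1 \<in> \<sigma>" "y = \<pi> x1" "0 \<le> a" using V(2) by (metis imageE)
    then show "\<psi> (a *\<^sub>R y) = a * \<psi> y" using cone_scale_point[OF \<sigma> m] \<psi> by metis
  qed
  then show ?thesis using \<psi> V(2) by (metis image_eqI)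
qed

lemma phi_linear_in_pi: "\<sigma> \<in> SL \<Longrightarrow> \<exists>w. \<forall>x\<in>\<sigma>. \<phi> x = w \<bullet> \<pi> x"
  using LM_linear_in_pi[OF _ phi_in_LM] unfolding zext_def by auto

lemma fan_face_integral:
  assumes "\<tau> \<in> \<Sigma>" "cone_face \<tau> F"
  shows "\<exists>u. int_vec u \<and> (\<forall>y\<in>\<tau>. 0 \<le> u \<bullet> y) \<and> F = {y\<in>\<tau>. u \<bullet> y = 0}"
proof -
  obtain u where u: "\<forall>x\<in>\<tau>. 0 \<le> u \<bullet> x" "F = {x\<in>\<tau>. u \<bullet> x = 0}"
    using assms(2) unfolding cone_face_def by blast
  obtain V where V: "finite V" "\<forall>v\<in>V. int_vec v" "\<tau> = cone_of V" using fan_cone[OF assms(1)] by blast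
  obtain u' where "int_vec u'" "\<forall>y\<in>cone_of V. 0 \<le> u' \<bullet> y" "\<forall>y\<in>cone_of V. u' \<bullet> y = 0 \<longleftrightarrow> u \<bullet> y = 0"
    using face_of_rational_cone_integral[OF V(1,2)] u(1) V(3) by blast
  then show ?thesis using u(2) V(3) by (intro exI[of _ u']) auto
qed

lemma face_relint_unique:
  assumes "\<tau>1 \<in> \<Sigma>" "\<tau>2 \<in> \<Sigma>" "y \<in> face_relint \<tau>1" "y \<in> face_relint \<tau>2"
  shows "\<tau>1 = \<tau>2"
proof -
  have "\<tau>1 \<inter> \<tau>2 = \<tau>1" using fan_inter_face[OF assms(1,2)] assms(3,4) unfolding face_relint_def by blast
  moreover have "\<tau>2 \<inter> \<tau>1 = \<tau>2" using fan_inter_face[OF assms(2,1)] assms(3,4) unfolding face_relint_def by blast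
  ultimately show ?thesis by blast
qed

lemma face_relint_subset:
  assumes "\<tau> \<in> \<Sigma>" "\<rho> \<in> \<Sigma>" "y \<in> face_relint \<tau>" "y \<in> \<rho>"
  shows "\<tau> \<subseteq> \<rho>"
  using fan_inter_face[OF assms(1,2)] assms(3,4) unfolding face_relint_def by blast

lemma zero_in_face_relint:
  assumes "\<tau> \<in> \<Sigma>" "0 \<in> face_relint \<tau>"
  shows "\<tau> = {0}"
proof -
  obtain V where V: "finite V" "\<tau> = cone_of V" using fan_cone[OF assms(1)] by blast
  obtain u where u: "\<forall>y\<in>\<tau>. y \<noteq> 0 \<longrightarrow> 0 < u \<bullet> y"
    using strongly_convex_cone_of_positive_functional[OF V(1)] fan_strongly_convex[OF assms(1)] V(2)
    by blast
  then have "cone_face \<tau> {x\<in>\<tau>. u \<bullet> x = 0}"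
    unfolding cone_face_def by (metis inner_zero_right less_eq_real_def)
  then have "{x\<in>\<tau>. u \<bullet> x = 0} = \<tau>" using assms(2) unfolding face_relint_def by simp
  then show ?thesis using u assms(2) unfolding face_relint_def by force
qed

lemma cc_relint_if_face_relint:
  assumes "\<sigma> \<in> SL" "x \<in> \<sigma>" "\<pi> x \<in> face_relint (\<pi> ` \<sigma>)"
  shows "x \<in> cc_relint LM \<sigma>"
  unfolding cc_relint_def
proof (intro CollectI conjI allI impI assms(2))
  fix \<tau>' assume "cc_face LM \<sigma> \<tau>' \<and> x \<in> \<tau>'"
  then obtain m where m: "m \<in> LM \<sigma>" "\<forall>x\<in>\<sigma>. 0 \<le> m x" "\<tau>' = {x\<in>\<sigma>. m x = 0}" "x \<in> \<tau>'"
    unfolding cc_face_def by blast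
  obtain w where w: "\<forall>x\<in>\<sigma>. m x = w \<bullet> \<pi> x" using LM_linear_in_pi[OF assms(1) m(1)] by blast
  have "cone_face (\<pi> ` \<sigma>) {y\<in>\<pi> ` \<sigma>. w \<bullet> y = 0}" unfolding cone_face_def using m(2) w by auto
  moreover have "\<pi> x \<in> {y\<in>\<pi> ` \<sigma>. w \<bullet> y = 0}" using m w by auto
  ultimately have "{y\<in>\<pi> ` \<sigma>. w \<bullet> y = 0} = \<pi> ` \<sigma>" using assms(3) unfolding face_relint_def by blast
  then show "\<tau>' = \<sigma>" using m(3) w by auto
qed

text \<open>An integral supporting functional of \<open>\<pi> ` \<sigma>\<close> pulls back to an element of \<open>M S\<close>; stated for
  any \<open>M\<close> containing these pull-backs, so that it also applies to the glued complex.\<close>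

lemma face_relint_if_relint:
  assumes \<sigma>: "\<pi> ` S = \<pi> ` \<sigma>" "\<sigma> \<in> SL"
    and M: "\<And>u. int_vec u \<Longrightarrow> zext S (\<lambda>x. u \<bullet> \<pi> x) \<in> M S"
    and x: "x \<in> cc_relint M S"
  shows "\<pi> x \<in> face_relint (\<pi> ` \<sigma>)"
  unfolding face_relint_def
proof (intro CollectI conjI allI impI)
  show "\<pi> x \<in> \<pi> ` \<sigma>" using x \<sigma>(1) unfolding cc_relint_def by blast
  fix F assume F: "cone_face (\<pi> ` \<sigma>) F \<and> \<pi> x \<in> F"
  then obtain u where u: "int_vec u" "\<forall>y\<in>\<pi> ` \<sigma>. 0 \<le> u \<bullet> y" "F = {y\<in>\<pi> ` \<sigma>. u \<bullet> y = 0}"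
    using fan_face_integral[OF pi_cone[OF \<sigma>(2)]] by blast
  have "cc_face M S {z\<in>S. zext S (\<lambda>x. u \<bullet> \<pi> x) z = 0}"
    unfolding cc_face_def using M[OF u(1)] u(2) \<sigma>(1)[symmetric]
    by (intro bexI[of _ "zext S (\<lambda>x. u \<bullet> \<pi> x)"]) (auto simp: zext_def)
  moreover have "x \<in> {z\<in>S. zext S (\<lambda>x. u \<bullet> \<pi> x) z = 0}"
    using x F u(3) unfolding cc_relint_def zext_def by auto
  ultimately have "{z\<in>S. zext S (\<lambda>x. u \<bullet> \<pi> x) z = 0} = S" using x unfolding cc_relint_def by blast
  then have "\<forall>z\<in>S. u \<bullet> \<pi> z = 0" unfolding zext_def by (metis (mono_tags, lifting) mem_Collect_eq)
  then have "\<forall>y\<in>\<pi> ` \<sigma>. u \<bullet> y = 0" unfolding \<sigma>(1)[symmetric] by blast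
  then show "F = \<pi> ` \<sigma>" using u(3) by auto
qed

lemma face_relint_pi:
  assumes "\<sigma> \<in> SL" "x \<in> cc_relint LM \<sigma>"
  shows "\<pi> x \<in> face_relint (\<pi> ` \<sigma>)"
  using face_relint_if_relint[OF refl assms(1) inner_pi_in_LM[OF assms(1)] assms(2)] .

lemma finite_fiber: "finite {x\<in>topspace L. \<pi> x = y}"
proof -
  have "{x\<in>topspace L. \<pi> x = y} \<subseteq> (\<Union>\<sigma>\<in>SL. {inv_into \<sigma> \<pi> y})"
  proof
    fix x assume x: "x \<in> {x\<in>topspace L. \<pi> x = y}"
    then obtain \<sigma> where "\<sigma> \<in> SL" "x \<in> \<sigma>" using topspace_eq_Union_SL by auto
    moreover from this have "inv_into \<sigma> \<pi> y = x" using x inv_into_f_f[OF inj_on_pi] by auto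
    ultimately show "x \<in> (\<Union>\<sigma>\<in>SL. {inv_into \<sigma> \<pi> y})" by auto
  qed
  then show ?thesis using SL_finite finite_subset by blast
qed

section \<open>Gluing over the one-skeleton\<close>

definition skeleton :: "'a set" where
  "skeleton = \<Union>{\<kappa>\<in>SL. dim (\<pi> ` \<kappa>) \<le> 1}"

definition glued :: "'a \<Rightarrow> 'a \<Rightarrow> bool" where
  "glued x z \<longleftrightarrow> x \<in> topspace L \<and> z \<in> topspace L \<and> \<pi> x = \<pi> z \<and> \<phi> x = \<phi> z \<and>
     (x = z \<or> x \<in> skeleton \<and> z \<in> skeleton)"

text \<open>The quotient \<open>L / glued\<close> has to live on the same type as \<open>L\<close>; it is realised as the set
  of chosen representatives of the classes.\<close>

definition rep :: "'a \<Rightarrow> 'a" where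
  "rep x = (SOME z. glued x z)"

lemma glued_refl: "x \<in> topspace L \<Longrightarrow> glued x x"
  and glued_sym: "glued x z \<Longrightarrow> glued z x"
  and glued_trans: "glued x y \<Longrightarrow> glued y z \<Longrightarrow> glued x z"
  and glued_topspace: "glued x z \<Longrightarrow> x \<in> topspace L \<and> z \<in> topspace L"
  and glued_pi_phi: "glued x z \<Longrightarrow> \<pi> x = \<pi> z \<and> \<phi> x = \<phi> z"
  unfolding glued_def by auto

lemma glued_rep: "x \<in> topspace L \<Longrightarrow> glued x (rep x)"
  unfolding rep_def by (rule someI) (rule glued_refl)

lemma rep_eq: "glued x z \<Longrightarrow> rep x = rep z"
proof -
  assume "glued x z"
  then have "glued x = glued z" using glued_sym glued_trans by blast
  then show ?thesis unfolding rep_def by simp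
qed

lemma rep_eq_iff: "x \<in> topspace L \<Longrightarrow> z \<in> topspace L \<Longrightarrow> rep x = rep z \<longleftrightarrow> glued x z"
  using glued_rep glued_sym glued_trans rep_eq by metis

lemma rep_topspace: "x \<in> topspace L \<Longrightarrow> rep x \<in> topspace L"
  and pi_rep: "x \<in> topspace L \<Longrightarrow> \<pi> (rep x) = \<pi> x"
  and phi_rep: "x \<in> topspace L \<Longrightarrow> \<phi> (rep x) = \<phi> x"
  and rep_rep: "x \<in> topspace L \<Longrightarrow> rep (rep x) = rep x"
  using glued_rep glued_topspace glued_pi_phi rep_eq glued_sym by metis+

lemma comb_pi_phi_rep: "x \<in> topspace L \<Longrightarrow> comb_pi_phi \<pi> \<phi> u k (rep x) = comb_pi_phi \<pi> \<phi> u k x"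
  unfolding comb_pi_phi_def by (simp add: pi_rep phi_rep)

text \<open>Both restrictions of \<open>\<phi>\<close> are linear in \<open>\<pi>\<close>, and on a ray a linear function is determined
  by one nonzero value.\<close>

lemma phi_agree_over_low_dim_cone:
  assumes \<sigma>: "\<sigma>1 \<in> SL" "\<sigma>2 \<in> SL" "\<pi> ` \<sigma>1 = \<pi> ` \<sigma>2" "dim (\<pi> ` \<sigma>1) \<le> 1"
    and x: "x1 \<in> \<sigma>1" "x2 \<in> \<sigma>2" "\<pi> x1 = \<pi> x2" "\<phi> x1 = \<phi> x2" "\<pi> x1 \<in> face_relint (\<pi> ` \<sigma>1)"
    and z: "z1 \<in> \<sigma>1" "z2 \<in> \<sigma>2" "\<pi> z1 = \<pi> z2"
  shows "\<phi> z1 = \<phi> z2"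
proof -
  obtain w1 w2 where w: "\<forall>x\<in>\<sigma>1. \<phi> x = w1 \<bullet> \<pi> x" "\<forall>x\<in>\<sigma>2. \<phi> x = w2 \<bullet> \<pi> x"
    using phi_linear_in_pi \<sigma>(1,2) by metis
  have "w1 \<bullet> \<pi> z1 = w2 \<bullet> \<pi> z1"
  proof (cases "\<pi> x1 = 0")
    case True
    then have "\<pi> ` \<sigma>1 = {0}" using zero_in_face_relint[OF pi_cone[OF \<sigma>(1)]] x(5) by simp
    then have "\<pi> z1 = 0" using z(1) by blast
    then show ?thesis by simp
  next
    case False
    obtain t where "\<pi> z1 = t *\<^sub>R \<pi> x1" using dim_le_one_collinear[OF \<sigma>(4) _ False] x(1) z(1) by blast
    moreover have "w1 \<bullet> \<pi> x1 = w2 \<bullet> \<pi> x1" using w x by metis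
    ultimately show ?thesis by simp
  qed
  then show ?thesis using w z by simp
qed

lemma glued_cone_point:
  assumes \<sigma>: "\<sigma>1 \<in> SL" "\<sigma>2 \<in> SL" "\<pi> ` \<sigma>1 = \<pi> ` \<sigma>2"
    and x: "x1 \<in> \<sigma>1" "x2 \<in> \<sigma>2" "\<pi> x1 \<in> face_relint (\<pi> ` \<sigma>1)" "glued x1 x2"
    and z1: "z1 \<in> \<sigma>1"
  shows "\<exists>z2\<in>\<sigma>2. glued z1 z2"
proof (cases "x1 = x2")
  case True
  then have "x1 \<in> cc_relint LM \<sigma>1" "x1 \<in> cc_relint LM \<sigma>2" "x1 \<in> topspace L"
    using cc_relint_if_face_relint \<sigma> x SL_subset[OF \<sigma>(1)] by auto
  then have "\<sigma>1 = \<sigma>2" using SL_relint \<sigma>(1,2) by blast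
  then show ?thesis using z1 glued_refl SL_subset[OF \<sigma>(1)] by blast
next
  case False
  then have "x1 \<in> skeleton" using x(4) unfolding glued_def by auto
  then obtain \<kappa> where \<kappa>: "\<kappa> \<in> SL" "x1 \<in> \<kappa>" "dim (\<pi> ` \<kappa>) \<le> 1" unfolding skeleton_def by blast
  have "\<pi> ` \<sigma>1 \<subseteq> \<pi> ` \<kappa>"
    using face_relint_subset[OF pi_cone[OF \<sigma>(1)] pi_cone[OF \<kappa>(1)]] x(3) \<kappa>(2) by blast
  then have dim: "dim (\<pi> ` \<sigma>1) \<le> 1" using \<kappa>(3) dim_subset order_trans by blast
  define z2 where "z2 = inv_into \<sigma>2 \<pi> (\<pi> z1)"
  have "\<pi> z1 \<in> \<pi> ` \<sigma>2" using z1 \<sigma>(3) by blast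
  then have z2: "z2 \<in> \<sigma>2" "\<pi> z2 = \<pi> z1"
    unfolding z2_def by (auto simp: inv_into_into f_inv_into_f)
  have "\<phi> z1 = \<phi> z2"
    using phi_agree_over_low_dim_cone[OF \<sigma> dim x(1,2) _ _ x(3) z1 z2(1)] x(4) z2(2)
    unfolding glued_def by simp
  moreover have "z1 \<in> skeleton" "z2 \<in> skeleton"
    unfolding skeleton_def using \<sigma> z1 z2(1) dim by auto
  ultimately have "glued z1 z2" unfolding glued_def using z1 z2 SL_subset \<sigma>(1,2) by auto
  then show ?thesis using z2(1) by blast
qed

lemma rep_image_eq:
  assumes \<sigma>: "\<sigma>1 \<in> SL" "\<sigma>2 \<in> SL" "\<pi> ` \<sigma>1 = \<pi> ` \<sigma>2"
    and x: "x1 \<in> \<sigma>1" "x2 \<in> \<sigma>2" "\<pi> x1 \<in> face_relint (\<pi> ` \<sigma>1)" "glued x1 x2"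
  shows "rep ` \<sigma>1 = rep ` \<sigma>2"
proof -
  have "\<pi> x2 \<in> face_relint (\<pi> ` \<sigma>2)" using x(3,4) \<sigma>(3) glued_pi_phi by metis
  then have "\<exists>z1\<in>\<sigma>1. glued z2 z1" if "z2 \<in> \<sigma>2" for z2
    using glued_cone_point[OF \<sigma>(2,1) \<sigma>(3)[symmetric] x(2,1) _ glued_sym[OF x(4)] that] by blast
  moreover have "\<exists>z2\<in>\<sigma>2. glued z1 z2" if "z1 \<in> \<sigma>1" for z1
    using glued_cone_point[OF \<sigma> x that] .
  ultimately show ?thesis using rep_eq by (auto simp: image_iff) metis+
qed

lemma closedin_skeleton: "closedin L skeleton"
  unfolding skeleton_def by (rule closedin_Union) (use SL_finite SL_closedin in auto)

section \<open>The glued cone complex\<close>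

definition sep_points :: "'a set" where
  "sep_points = rep ` topspace L"

definition sep_top :: "'a topology" where
  "sep_top = quotient_topology L rep"

definition sep_cones :: "'a set set" where
  "sep_cones = (\<lambda>\<sigma>. rep ` \<sigma>) ` SL"

text \<open>The lattice of a glued cone is generated by the coordinates of \<open>\<pi>\<close> and by \<open>\<phi>\<close>: these
  functions descend to the quotient, and on each cone \<open>\<sigma>\<close> they form a subgroup of \<open>M(\<sigma>)\<close>, which
  therefore has a \<open>\<int>\<close>-basis.\<close>

definition pi_phi_funs :: "('a \<Rightarrow> real) set" where
  "pi_phi_funs = {comb_pi_phi \<pi> \<phi> u k | u k. int_vec u}"

definition sep_M :: "'a set \<Rightarrow> ('a \<Rightarrow> real) set" where
  "sep_M S = zext S ` pi_phi_funs"

definition sep_weight :: "'a \<Rightarrow> nat" where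
  "sep_weight = trace rep \<mu> (topspace L)"

lemma sep_points_subset: "sep_points \<subseteq> topspace L"
  unfolding sep_points_def using rep_topspace by auto

lemma rep_sep_point: "x \<in> sep_points \<Longrightarrow> rep x = x"
  unfolding sep_points_def using rep_rep by auto

lemma topspace_sep_top: "topspace sep_top = sep_points"
  unfolding sep_top_def sep_points_def by (rule topspace_quotient_topology)

lemma continuous_rep: "continuous_map L sep_top rep"
  unfolding sep_top_def by (rule continuous_map_quotient_topology)

lemma continuous_pi_sep: "continuous_map sep_top euclidean \<pi>"
  unfolding sep_top_def by (rule continuous_map_from_quotient_topology[OF continuous_pi]) (simp add: pi_rep)

lemma continuous_phi_sep: "continuous_map sep_top euclideanreal \<phi>"
  unfolding sep_top_def by (rule continuous_map_from_quotient_topology[OF continuous_phi]) (simp add: phi_rep)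

lemma continuous_comb_pi_phi:
  assumes "continuous_map X euclidean \<pi>" "continuous_map X euclideanreal \<phi>"
  shows "continuous_map X euclideanreal (comb_pi_phi \<pi> \<phi> u k)"
proof -
  have "continuous_map X euclideanreal ((\<lambda>y. u \<bullet> y) \<circ> \<pi>)"
    by (rule continuous_map_compose[OF assms(1)]) (simp add: continuous_on_inner continuous_on_id)
  then show ?thesis unfolding comb_pi_phi_def o_def using assms(2) by (intro continuous_intros) auto
qed

lemma rep_cone_subset: "\<sigma> \<in> SL \<Longrightarrow> rep ` \<sigma> \<subseteq> sep_points"
  unfolding sep_points_def using SL_subset by auto

lemma pi_rep_cone: "\<sigma> \<in> SL \<Longrightarrow> \<pi> ` rep ` \<sigma> = \<pi> ` \<sigma>"
  using SL_subset pi_rep by (force simp: image_image intro!: image_cong)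

lemma inj_on_pi_rep_cone:
  assumes "\<sigma> \<in> SL"
  shows "inj_on \<pi> (rep ` \<sigma>)"
proof
  fix a b assume "a \<in> rep ` \<sigma>" "b \<in> rep ` \<sigma>" "\<pi> a = \<pi> b"
  moreover from this obtain za zb where z: "za \<in> \<sigma>" "zb \<in> \<sigma>" "a = rep za" "b = rep zb" by auto
  ultimately have "\<pi> za = \<pi> zb" using SL_subset[OF assms] pi_rep by (metis subsetD)
  then have "za = zb" using inj_on_pi[OF assms] z by (meson inj_onD)
  then show "a = b" using z by simp
qed

lemma rep_saturation:
  assumes \<sigma>: "\<sigma> \<in> SL" and g: "\<And>x. x \<in> \<sigma> \<Longrightarrow> g (\<pi> x) = x"
  shows "{x\<in>topspace L. rep x \<in> rep ` \<sigma>} =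
           \<sigma> \<union> {x\<in>topspace L. x \<in> skeleton \<and> \<pi> x \<in> \<pi> ` (\<sigma> \<inter> skeleton) \<and> \<phi> x = \<phi> (g (\<pi> x))}"
proof (intro equalityI subsetI)
  fix x assume "x \<in> {x\<in>topspace L. rep x \<in> rep ` \<sigma>}"
  then obtain z where z: "x \<in> topspace L" "z \<in> \<sigma>" "rep x = rep z" by auto
  then have "glued x z" using rep_eq_iff SL_subset[OF \<sigma>] by blast
  then show "x \<in> \<sigma> \<union> {x\<in>topspace L. x \<in> skeleton \<and> \<pi> x \<in> \<pi> ` (\<sigma> \<inter> skeleton) \<and> \<phi> x = \<phi> (g (\<pi> x))}"
    using z g[OF z(2)] unfolding glued_def by (cases "x = z") auto
next
  fix x assume x: "x \<in> \<sigma> \<union> {x\<in>topspace L. x \<in> skeleton \<and> \<pi> x \<in> \<pi> ` (\<sigma> \<inter> skeleton) \<and> \<phi> x = \<phi> (g (\<pi> x))}"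
  show "x \<in> {x\<in>topspace L. rep x \<in> rep ` \<sigma>}"
  proof (cases "x \<in> \<sigma>")
    case True
    then show ?thesis using SL_subset[OF \<sigma>] by auto
  next
    case False
    then obtain z where "z \<in> \<sigma>" "z \<in> skeleton" "\<pi> x = \<pi> z" "x \<in> topspace L" "x \<in> skeleton" "\<phi> x = \<phi> z"
      using x g by auto
    then have "glued x z" unfolding glued_def using SL_subset[OF \<sigma>] by auto
    then show ?thesis using \<open>z \<in> \<sigma>\<close> rep_eq glued_topspace by blast
  qed
qed

lemma closedin_glued_to_cone:
  assumes \<sigma>: "\<sigma> \<in> SL" and g: "continuous_map (subtopology euclidean (\<pi> ` \<sigma>)) (subtopology L \<sigma>) g"
  shows "closedin L {x\<in>topspace L. x \<in> skeleton \<and> \<pi> x \<in> \<pi> ` (\<sigma> \<inter> skeleton) \<and> \<phi> x = \<phi> (g (\<pi> x))}"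
proof -
  define K where "K = \<pi> ` (\<sigma> \<inter> skeleton)"
  have "closedin (subtopology L \<sigma>) (\<sigma> \<inter> skeleton)"
    using closedin_skeleton by (simp add: closedin_subtopology_Int_closed)
  then have "closedin (subtopology euclidean (\<pi> ` \<sigma>)) K"
    unfolding K_def using homeomorphic_map_closedness[OF pi_homeomorphic[OF \<sigma>], of "\<sigma> \<inter> skeleton"]
      SL_subset[OF \<sigma>] by auto
  moreover have "closedin euclidean (\<pi> ` \<sigma>)"
    using pi_cone_of[OF \<sigma>] closed_cone_of by (auto simp: closed_closedin[symmetric])
  ultimately have cK: "closedin euclidean K" using closedin_trans_full by blast
  define A where "A = {x\<in>topspace L. x \<in> skeleton \<and> \<pi> x \<in> K}"
  have "A = skeleton \<inter> {x\<in>topspace L. \<pi> x \<in> K}"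
    unfolding A_def using closedin_subset[OF closedin_skeleton] by auto
  then have cA: "closedin L A"
    using closedin_skeleton closedin_continuous_map_preimage[OF continuous_pi cK] by auto
  have "continuous_map (subtopology L A) (subtopology euclidean (\<pi> ` \<sigma>)) \<pi>"
    using continuous_map_from_subtopology[OF continuous_pi] unfolding A_def K_def
    by (intro continuous_map_into_subtopology) auto
  then have "continuous_map (subtopology L A) euclideanreal (\<phi> \<circ> g \<circ> \<pi>)"
    using continuous_map_compose[OF g continuous_map_from_subtopology[OF continuous_phi]]
    by (rule continuous_map_compose)
  then have "continuous_map (subtopology L A) euclideanreal (\<lambda>x. \<phi> (g (\<pi> x)))"
    by (simp add: o_def)
  then have "continuous_map (subtopology L A) euclideanreal (\<lambda>x. \<phi> x - \<phi> (g (\<pi> x)))"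
    using continuous_map_from_subtopology[OF continuous_phi] by (intro continuous_map_diff)
  then have "closedin (subtopology L A) {x\<in>topspace (subtopology L A). \<phi> x - \<phi> (g (\<pi> x)) \<in> {0}}"
    by (rule closedin_continuous_map_preimage) simp
  moreover have "{x\<in>topspace (subtopology L A). \<phi> x - \<phi> (g (\<pi> x)) \<in> {0}} =
      {x\<in>topspace L. x \<in> skeleton \<and> \<pi> x \<in> K \<and> \<phi> x = \<phi> (g (\<pi> x))}"
    unfolding A_def by auto
  ultimately show ?thesis using closedin_trans_full cA unfolding K_def by metis
qed

lemma closedin_rep_cone:
  assumes \<sigma>: "\<sigma> \<in> SL"
  shows "closedin sep_top (rep ` \<sigma>)"
proof -
  obtain g where g: "continuous_map (subtopology euclidean (\<pi> ` \<sigma>)) (subtopology L \<sigma>) g"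
    "\<And>x. x \<in> \<sigma> \<Longrightarrow> g (\<pi> x) = x"
    using pi_inverse[OF \<sigma>] by metis
  have "closedin L {x\<in>topspace L. rep x \<in> rep ` \<sigma>}"
    using rep_saturation[OF \<sigma> g(2)] SL_closedin[OF \<sigma>] closedin_glued_to_cone[OF \<sigma> g(1)]
    by (simp add: closedin_Un)
  then show ?thesis unfolding sep_top_def closedin_quotient_topology using SL_subset[OF \<sigma>] by auto
qed

lemma continuous_rep_cone: "\<sigma> \<in> SL \<Longrightarrow> continuous_map (subtopology L \<sigma>) (subtopology sep_top (rep ` \<sigma>)) rep"
  using continuous_map_from_subtopology[OF continuous_rep] SL_subset
  by (intro continuous_map_into_subtopology) auto

lemma topspace_sep_cone: "\<sigma> \<in> SL \<Longrightarrow> topspace (subtopology sep_top (rep ` \<sigma>)) = rep ` \<sigma>"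
  using rep_cone_subset topspace_sep_top by (auto simp: Int_absorb1)

lemma pi_homeomorphic_rep_cone:
  assumes \<sigma>: "\<sigma> \<in> SL"
  shows "homeomorphic_map (subtopology sep_top (rep ` \<sigma>)) (subtopology euclidean (\<pi> ` \<sigma>)) \<pi>"
proof -
  obtain g where g: "continuous_map (subtopology euclidean (\<pi> ` \<sigma>)) (subtopology L \<sigma>) g"
    "\<And>x. x \<in> \<sigma> \<Longrightarrow> g (\<pi> x) = x" "\<And>y. y \<in> \<pi> ` \<sigma> \<Longrightarrow> \<pi> (g y) = y" "\<And>y. y \<in> \<pi> ` \<sigma> \<Longrightarrow> g y \<in> \<sigma>"
    using pi_inverse[OF \<sigma>] by blast
  have "continuous_map (subtopology sep_top (rep ` \<sigma>)) (subtopology euclidean (\<pi> ` \<sigma>)) \<pi>"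
    using continuous_map_from_subtopology[OF continuous_pi_sep] pi_rep_cone[OF \<sigma>] topspace_sep_cone[OF \<sigma>]
    by (intro continuous_map_into_subtopology) auto
  moreover have "continuous_map (subtopology euclidean (\<pi> ` \<sigma>)) (subtopology sep_top (rep ` \<sigma>)) (rep \<circ> g)"
    using continuous_map_compose[OF g(1) continuous_rep_cone[OF \<sigma>]] .
  moreover have "rep (g (\<pi> x)) = x" if "x \<in> rep ` \<sigma>" for x
    using that g(2) SL_subset[OF \<sigma>] pi_rep by auto
  moreover have "\<pi> (rep (g y)) = y" if "y \<in> \<pi> ` \<sigma>" for y
  proof -
    have "g y \<in> topspace L" using g(4)[OF that] SL_subset[OF \<sigma>] by blast
    then show ?thesis using pi_rep g(3)[OF that] by simp
  qed
  ultimately have "homeomorphic_maps (subtopology sep_top (rep ` \<sigma>)) (subtopology euclidean (\<pi> ` \<sigma>)) \<pi> (rep \<circ> g)"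
    unfolding homeomorphic_maps_def using topspace_sep_cone[OF \<sigma>] by auto
  then show ?thesis using homeomorphic_map_maps by blast
qed

lemma comb_pi_phi_add: "comb_pi_phi \<pi> \<phi> u k + comb_pi_phi \<pi> \<phi> u' k' = comb_pi_phi \<pi> \<phi> (u + u') (k + k')"
  and comb_pi_phi_uminus: "- comb_pi_phi \<pi> \<phi> u k = comb_pi_phi \<pi> \<phi> (- u) (- k)"
  and comb_pi_phi_zero: "comb_pi_phi \<pi> \<phi> 0 0 = 0"
  unfolding comb_pi_phi_def by (auto simp: fun_eq_iff algebra_simps inner_add_left)

lemma pi_phi_funs_group:
  "0 \<in> pi_phi_funs" "a \<in> pi_phi_funs \<Longrightarrow> b \<in> pi_phi_funs \<Longrightarrow> a + b \<in> pi_phi_funs"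
  "a \<in> pi_phi_funs \<Longrightarrow> - a \<in> pi_phi_funs"
  unfolding pi_phi_funs_def int_vec_def
  by (force simp: comb_pi_phi_add comb_pi_phi_uminus comb_pi_phi_zero[symmetric])+

lemma continuous_evmap_pi_phi:
  assumes "set gs \<subseteq> pi_phi_funs"
  shows "continuous_map (subtopology sep_top S) euclidean (evmap gs)"
  unfolding euclidean_product_topology[symmetric] continuous_map_componentwise_UNIV
proof
  fix j
  have "continuous_map (subtopology sep_top S) euclideanreal (gs!j)" if j: "j < length gs"
  proof -
    obtain u k where "gs!j = comb_pi_phi \<pi> \<phi> u k"
      using assms nth_mem[OF j] unfolding pi_phi_funs_def by blast
    then show ?thesis
      using continuous_comb_pi_phi[OF continuous_map_from_subtopology[OF continuous_pi_sep]
          continuous_map_from_subtopology[OF continuous_phi_sep]] by simp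
  qed
  then show "continuous_map (subtopology sep_top S) euclideanreal (\<lambda>x. evmap gs x j)"
    unfolding evmap_def by (cases "j < length gs") auto
qed

text \<open>The coordinates of \<open>\<pi>\<close> lie in \<open>sep_M S\<close>.\<close>

lemma pi_from_evmap:
  assumes "zbasis S (sep_M S) gs"
  obtains B where "continuous_map euclidean euclidean B" "\<And>y. y \<in> S \<Longrightarrow> B (evmap gs y) = \<pi> y"
proof -
  have "\<exists>d. \<forall>y\<in>S. \<pi> y $ l = lincomb gs d y" for l
  proof -
    have "zext S (comb_pi_phi \<pi> \<phi> (axis l 1) 0) \<in> sep_M S"
      unfolding sep_M_def pi_phi_funs_def using int_vec_axis by blast
    then obtain d where "\<forall>i\<ge>length gs. d i = 0"
      "\<And>y. y \<in> S \<Longrightarrow> zext S (comb_pi_phi \<pi> \<phi> (axis l 1) 0) y = lincomb gs d y"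
      by (rule zbasis_coefficients[OF assms]) blast
    then show ?thesis unfolding zext_def comb_pi_phi_def by (auto simp: inner_axis')
  qed
  then obtain d where d: "\<And>l y. y \<in> S \<Longrightarrow> \<pi> y $ l = lincomb gs (d l) y"
    by metis
  define B where "B = (\<lambda>c::nat \<Rightarrow> real. \<chi> l. \<Sum>j<length gs. of_int (d l j) * c j)"
  have "continuous_map euclidean euclidean B"
    unfolding continuous_map_iff_continuous2 B_def
    by (intro continuous_on_vec_lambda continuous_on_sum continuous_on_mult continuous_on_const
        continuous_on_product_coordinates)
  moreover have "B (evmap gs y) = \<pi> y" if "y \<in> S" for y
    using d[OF that] unfolding B_def evmap_def lincomb_def by (simp add: vec_eq_iff)
  ultimately show ?thesis using that by blast
qed

lemma homeomorphic_evmap_sep: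
  assumes \<sigma>: "\<sigma> \<in> SL" and gs: "zbasis (rep ` \<sigma>) (sep_M (rep ` \<sigma>)) gs" "set gs \<subseteq> pi_phi_funs"
  shows "homeomorphic_map (subtopology sep_top (rep ` \<sigma>)) (subtopology euclidean (evmap gs ` rep ` \<sigma>))
           (evmap gs)"
proof -
  obtain B where "continuous_map euclidean euclidean B" "\<And>y. y \<in> rep ` \<sigma> \<Longrightarrow> B (evmap gs y) = \<pi> y"
    using pi_from_evmap[OF gs(1)] by blast
  then show ?thesis
    using homeomorphic_map_factor[OF pi_homeomorphic_rep_cone[OF \<sigma>] continuous_evmap_pi_phi[OF gs(2)]]
      rep_cone_subset[OF \<sigma>] topspace_sep_top by blast
qed

lemma sep_cone_basis:
  assumes \<sigma>: "\<sigma> \<in> SL"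
  shows "\<exists>gs C'. zbasis (rep ` \<sigma>) (sep_M (rep ` \<sigma>)) gs \<and> rat_poly_cone_k (length gs) C' \<and>
           homeomorphic_map (subtopology sep_top (rep ` \<sigma>)) (subtopology euclidean C') (evmap gs)"
proof -
  obtain fs C where zb: "zbasis \<sigma> (LM \<sigma>) fs" and C: "rat_poly_cone_k (length fs) C"
    and hm: "homeomorphic_map (subtopology L \<sigma>) (subtopology euclidean C) (evmap fs)"
    using SL_basis[OF \<sigma>] by blast
  have "zext \<sigma> ` pi_phi_funs \<subseteq> LM \<sigma>"
    unfolding pi_phi_funs_def using comb_pi_phi_in_LM[OF \<sigma>] by blast
  then obtain gs Mx where gs: "zbasis \<sigma> (zext \<sigma> ` pi_phi_funs) gs" "set gs \<subseteq> pi_phi_funs"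
    and Mx: "\<And>j x. j < length gs \<Longrightarrow> x \<in> \<sigma> \<Longrightarrow> (gs!j) x = lincomb fs (Mx j) x"
    by (rule zbasis_of_subgroup[OF zb _ pi_phi_funs_group]) blast+
  have rep_inv: "g (rep x) = g x" if "x \<in> \<sigma>" "g \<in> pi_phi_funs" for x g
    using that SL_subset[OF \<sigma>] comb_pi_phi_rep unfolding pi_phi_funs_def by auto
  have zb': "zbasis (rep ` \<sigma>) (sep_M (rep ` \<sigma>)) gs"
    unfolding sep_M_def using zbasis_image[OF gs(1)] rep_inv gs(2) by blast
  define A where "A = int_matrix_map (length gs) (length fs) Mx"
  have "evmap gs (rep x) = A (evmap fs x)" if x: "x \<in> \<sigma>" for x
  proof -
    have "(gs!j) (rep x) = (gs!j) x" if "j < length gs" for j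
      using rep_inv[OF x] gs(2) nth_mem[OF that] by blast
    then have "evmap gs (rep x) = evmap gs x" unfolding evmap_def by (simp add: fun_eq_iff)
    then show ?thesis unfolding A_def using evmap_int_matrix_map Mx[OF _ x] by metis
  qed
  moreover have "evmap fs ` \<sigma> = C"
    using homeomorphic_imp_surjective_map[OF hm] SL_subset[OF \<sigma>] by (simp add: Int_absorb1)
  ultimately have "evmap gs ` rep ` \<sigma> = A ` C" by (auto simp: image_image intro!: image_cong)
  then show ?thesis
    using zb' homeomorphic_evmap_sep[OF \<sigma> zb' gs(2)] rat_poly_cone_k_int_matrix_image[OF C]
    unfolding A_def by metis
qed

lemma sep_M_iff: "m \<in> sep_M S \<longleftrightarrow> (\<exists>u k. int_vec u \<and> m = zext S (comb_pi_phi \<pi> \<phi> u k))"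
  unfolding sep_M_def pi_phi_funs_def by auto

lemma inner_pi_in_sep_M: "int_vec u \<Longrightarrow> zext S (\<lambda>x. u \<bullet> \<pi> x) \<in> sep_M S"
  unfolding sep_M_iff comb_pi_phi_def by (rule exI[of _ u], rule exI[of _ 0]) simp

lemma face_relint_sep:
  assumes "\<sigma> \<in> SL" "x \<in> cc_relint sep_M (rep ` \<sigma>)"
  shows "\<pi> x \<in> face_relint (\<pi> ` \<sigma>)"
  using face_relint_if_relint[OF pi_rep_cone[OF assms(1)] assms(1) inner_pi_in_sep_M assms(2)] .

lemma sep_cone_face:
  assumes \<sigma>: "\<sigma> \<in> SL" and f: "cc_face sep_M (rep ` \<sigma>) \<tau>'"
  shows "\<tau>' \<in> sep_cones"
proof -
  obtain m where m: "m \<in> sep_M (rep ` \<sigma>)" "\<forall>x\<in>rep ` \<sigma>. 0 \<le> m x" "\<tau>' = {x\<in>rep ` \<sigma>. m x = 0}"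
    using f unfolding cc_face_def by blast
  then obtain u k where "int_vec u" "m = zext (rep ` \<sigma>) (comb_pi_phi \<pi> \<phi> u k)"
    unfolding sep_M_iff by blast
  with m have uk: "int_vec u" "\<forall>x\<in>rep ` \<sigma>. 0 \<le> comb_pi_phi \<pi> \<phi> u k x"
    "\<tau>' = {x\<in>rep ` \<sigma>. comb_pi_phi \<pi> \<phi> u k x = 0}"
    by (auto simp: zext_def)
  have inv: "comb_pi_phi \<pi> \<phi> u k (rep z) = comb_pi_phi \<pi> \<phi> u k z" if "z \<in> \<sigma>" for z
    using comb_pi_phi_rep SL_subset[OF \<sigma>] that by blast
  define Z where "Z = {z\<in>\<sigma>. zext \<sigma> (comb_pi_phi \<pi> \<phi> u k) z = 0}"
  have "cc_face LM \<sigma> Z"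
    unfolding cc_face_def Z_def using comb_pi_phi_in_LM[OF \<sigma> uk(1)] uk(2) inv
    by (intro bexI[of _ "zext \<sigma> (comb_pi_phi \<pi> \<phi> u k)"]) (auto simp: zext_def)
  then have "Z \<in> SL" using SL_face[OF \<sigma>] by blast
  moreover have "rep ` Z = \<tau>'" unfolding Z_def uk(3) zext_def using inv by auto
  ultimately show ?thesis unfolding sep_cones_def by blast
qed

lemma sep_M_face: "\<tau>' \<subseteq> \<sigma>' \<Longrightarrow> sep_M \<tau>' = zext \<tau>' ` sep_M \<sigma>'"
  unfolding sep_M_def image_comp by (intro image_cong refl) (auto simp: zext_def fun_eq_iff)

lemma sep_relint_unique:
  assumes \<sigma>: "\<sigma>1 \<in> SL" "\<sigma>2 \<in> SL"
    and x: "x \<in> cc_relint sep_M (rep ` \<sigma>1)" "x \<in> cc_relint sep_M (rep ` \<sigma>2)"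
  shows "rep ` \<sigma>1 = rep ` \<sigma>2"
proof -
  have relint: "\<pi> x \<in> face_relint (\<pi> ` \<sigma>1)" "\<pi> x \<in> face_relint (\<pi> ` \<sigma>2)"
    using face_relint_sep \<sigma> x by auto
  then have "\<pi> ` \<sigma>1 = \<pi> ` \<sigma>2" using face_relint_unique pi_cone \<sigma> by blast
  moreover obtain z1 z2 where z: "z1 \<in> \<sigma>1" "z2 \<in> \<sigma>2" "x = rep z1" "x = rep z2"
    using x unfolding cc_relint_def by auto
  moreover have "glued z1 z2" using rep_eq_iff z SL_subset \<sigma> by blast
  moreover have "\<pi> z1 \<in> face_relint (\<pi> ` \<sigma>1)" using relint(1) z pi_rep SL_subset[OF \<sigma>(1)] by auto
  ultimately show ?thesis using rep_image_eq[OF \<sigma>] by blast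
qed

lemma sep_relint_exists:
  assumes x: "x \<in> sep_points"
  shows "\<exists>\<sigma>'\<in>sep_cones. x \<in> cc_relint sep_M \<sigma>'"
proof -
  define Cs where "Cs = {\<sigma>'\<in>sep_cones. x \<in> \<sigma>'}"
  have "finite Cs" unfolding Cs_def sep_cones_def using SL_finite by simp
  moreover have "Cs \<noteq> {}"
  proof -
    obtain \<sigma> where "\<sigma> \<in> SL" "x \<in> \<sigma>" using x sep_points_subset topspace_eq_Union_SL by auto
    then have "rep ` \<sigma> \<in> Cs" unfolding Cs_def sep_cones_def using rep_sep_point[OF x] by force
    then show ?thesis by auto
  qed
  ultimately obtain m where m: "m \<in> Cs" "\<And>b. b \<in> Cs \<Longrightarrow> b \<subseteq> m \<Longrightarrow> m = b"
    using finite_has_minimal by metis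
  have "x \<in> cc_relint sep_M m" unfolding cc_relint_def
  proof (intro CollectI conjI allI impI)
    show "x \<in> m" using m(1) unfolding Cs_def by auto
    fix \<tau>' assume \<tau>': "cc_face sep_M m \<tau>' \<and> x \<in> \<tau>'"
    then have "\<tau>' \<in> sep_cones" using sep_cone_face m(1) unfolding Cs_def sep_cones_def by blast
    moreover have "\<tau>' \<subseteq> m" using \<tau>' unfolding cc_face_def by auto
    ultimately show "\<tau>' = m" using m(2) \<tau>' unfolding Cs_def by auto
  qed
  then show ?thesis using m(1) unfolding Cs_def by auto
qed

lemma cone_complex_sep: "cone_complex sep_top sep_cones sep_M"
  unfolding cone_complex_def
proof (intro conjI ballI allI impI)
  show "finite sep_cones" unfolding sep_cones_def using SL_finite by simp
next
  fix \<sigma>' assume "\<sigma>' \<in> sep_cones"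
  then obtain \<sigma> where \<sigma>: "\<sigma> \<in> SL" "\<sigma>' = rep ` \<sigma>" unfolding sep_cones_def by auto
  show "\<sigma>' \<subseteq> topspace sep_top" using rep_cone_subset[OF \<sigma>(1)] \<sigma>(2) topspace_sep_top by simp
  show "closedin sep_top \<sigma>'" using closedin_rep_cone[OF \<sigma>(1)] \<sigma>(2) by simp
  show "\<exists>fs C. zbasis \<sigma>' (sep_M \<sigma>') fs \<and> rat_poly_cone_k (length fs) C \<and>
      homeomorphic_map (subtopology sep_top \<sigma>') (subtopology euclidean C) (evmap fs)"
    using sep_cone_basis[OF \<sigma>(1)] \<sigma>(2) by simp
  fix \<tau>' assume f: "cc_face sep_M \<sigma>' \<tau>'"
  then show "\<tau>' \<in> sep_cones" using sep_cone_face \<sigma> by blast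
  have "\<tau>' \<subseteq> \<sigma>'" using f unfolding cc_face_def by auto
  then show "sep_M \<tau>' = zext \<tau>' ` sep_M \<sigma>'" by (rule sep_M_face)
next
  fix \<sigma>' m assume "\<sigma>' \<in> sep_cones" "m \<in> sep_M \<sigma>'"
  then obtain u k where m: "m = zext \<sigma>' (comb_pi_phi \<pi> \<phi> u k)" unfolding sep_M_iff by blast
  have "continuous_map (subtopology sep_top \<sigma>') euclideanreal (comb_pi_phi \<pi> \<phi> u k)"
    by (intro continuous_comb_pi_phi continuous_map_from_subtopology continuous_pi_sep continuous_phi_sep)
  then show "continuous_map (subtopology sep_top \<sigma>') euclideanreal m"
    by (rule continuous_map_eq) (simp add: m zext_def)
next
  fix x assume "x \<in> topspace sep_top"
  then obtain \<sigma>' where \<sigma>': "\<sigma>' \<in> sep_cones" "x \<in> cc_relint sep_M \<sigma>'"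
    using sep_relint_exists topspace_sep_top by auto
  then show "\<exists>!\<sigma>. \<sigma> \<in> sep_cones \<and> x \<in> cc_relint sep_M \<sigma>"
    using sep_relint_unique unfolding sep_cones_def by blast
qed

section \<open>Weights and the covering property\<close>

lemma sep_weight_pos: "x \<in> sep_points \<Longrightarrow> 0 < sep_weight x"
proof -
  assume x: "x \<in> sep_points"
  then have xL: "x \<in> topspace L" and "rep x = x" using sep_points_subset rep_sep_point by auto
  moreover have "{z\<in>topspace L. rep z = x} \<subseteq> {z\<in>topspace L. \<pi> z = \<pi> x}" using pi_rep by force
  then have "finite {z\<in>topspace L. rep z = x}" using finite_fiber finite_subset by blast
  ultimately have "\<mu> x \<le> sep_weight x" unfolding sep_weight_def trace_def by (intro member_le_sum) auto
  then show ?thesis using mu_pos[OF xL] by simp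
qed

lemma rep_fiber_relint:
  assumes \<sigma>: "\<sigma> \<in> SL" and x: "x \<in> cc_relint sep_M (rep ` \<sigma>)"
    and \<kappa>: "\<kappa> \<in> SL" "rep ` \<kappa> = rep ` \<sigma>"
  shows "inv_into \<kappa> \<pi> (\<pi> x) \<in> \<kappa>" "\<pi> (inv_into \<kappa> \<pi> (\<pi> x)) = \<pi> x"
    and "inv_into \<kappa> \<pi> (\<pi> x) \<in> cc_relint LM \<kappa>"
proof -
  have "\<pi> ` \<kappa> = \<pi> ` \<sigma>" using pi_rep_cone \<sigma> \<kappa> by metis
  moreover have x\<sigma>: "\<pi> x \<in> face_relint (\<pi> ` \<sigma>)" using face_relint_sep[OF \<sigma> x] .
  ultimately have "\<pi> x \<in> \<pi> ` \<kappa>" unfolding face_relint_def by auto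
  then show i: "inv_into \<kappa> \<pi> (\<pi> x) \<in> \<kappa>" and pe: "\<pi> (inv_into \<kappa> \<pi> (\<pi> x)) = \<pi> x"
    by (auto simp: inv_into_into f_inv_into_f)
  show "inv_into \<kappa> \<pi> (\<pi> x) \<in> cc_relint LM \<kappa>"
    using cc_relint_if_face_relint[OF \<kappa>(1) i] pe x\<sigma> \<open>\<pi> ` \<kappa> = \<pi> ` \<sigma>\<close> by simp
qed

lemma rep_fiber:
  assumes \<sigma>: "\<sigma> \<in> SL" and x: "x \<in> cc_relint sep_M (rep ` \<sigma>)"
  shows "{z\<in>topspace L. rep z = x} = (\<lambda>\<kappa>. inv_into \<kappa> \<pi> (\<pi> x)) ` {\<kappa>\<in>SL. rep ` \<kappa> = rep ` \<sigma>}"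
proof (intro equalityI subsetI)
  obtain z0 where z0: "z0 \<in> \<sigma>" "x = rep z0" "z0 \<in> topspace L"
    using x SL_subset[OF \<sigma>] unfolding cc_relint_def by auto
  fix z assume "z \<in> {z\<in>topspace L. rep z = x}"
  then have z: "z \<in> topspace L" "rep z = x" by auto
  obtain \<kappa> where \<kappa>: "\<kappa> \<in> SL" "z \<in> cc_relint LM \<kappa>" using SL_relint[OF z(1)] by blast
  have z\<kappa>: "z \<in> \<kappa>" using \<kappa>(2) unfolding cc_relint_def by auto
  have "\<pi> z = \<pi> x" using z pi_rep by auto
  then have "\<pi> ` \<kappa> = \<pi> ` \<sigma>"
    using face_relint_unique[OF pi_cone[OF \<kappa>(1)] pi_cone[OF \<sigma>]] face_relint_pi[OF \<kappa>]
      face_relint_sep[OF \<sigma> x] by simp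
  moreover have "glued z z0" using rep_eq_iff z z0 by blast
  ultimately have "rep ` \<kappa> = rep ` \<sigma>" using rep_image_eq[OF \<kappa>(1) \<sigma> _ z\<kappa> z0(1)] face_relint_pi[OF \<kappa>] by blast
  moreover have "inv_into \<kappa> \<pi> (\<pi> x) = z" using inv_into_f_f[OF inj_on_pi[OF \<kappa>(1)] z\<kappa>] \<open>\<pi> z = \<pi> x\<close> by simp
  ultimately show "z \<in> (\<lambda>\<kappa>. inv_into \<kappa> \<pi> (\<pi> x)) ` {\<kappa>\<in>SL. rep ` \<kappa> = rep ` \<sigma>}" using \<kappa>(1) by force
next
  fix z assume "z \<in> (\<lambda>\<kappa>. inv_into \<kappa> \<pi> (\<pi> x)) ` {\<kappa>\<in>SL. rep ` \<kappa> = rep ` \<sigma>}"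
  then obtain \<kappa> where \<kappa>: "\<kappa> \<in> SL" "rep ` \<kappa> = rep ` \<sigma>" "z = inv_into \<kappa> \<pi> (\<pi> x)" by auto
  then have z: "z \<in> \<kappa>" "\<pi> z = \<pi> x" using rep_fiber_relint[OF \<sigma> x] by auto
  then have "z \<in> topspace L" "rep z \<in> rep ` \<sigma>" using SL_subset \<kappa> by auto
  moreover from this have "\<pi> (rep z) = \<pi> x" using pi_rep z(2) by simp
  moreover have "x \<in> rep ` \<sigma>" using x unfolding cc_relint_def by auto
  ultimately show "z \<in> {z\<in>topspace L. rep z = x}" using inj_on_pi_rep_cone[OF \<sigma>] by (auto dest: inj_onD)
qed

lemma inj_on_rep_fiber:
  assumes \<sigma>: "\<sigma> \<in> SL" and x: "x \<in> cc_relint sep_M (rep ` \<sigma>)"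
  shows "inj_on (\<lambda>\<kappa>. inv_into \<kappa> \<pi> (\<pi> x)) {\<kappa>\<in>SL. rep ` \<kappa> = rep ` \<sigma>}"
proof
  fix \<kappa>1 \<kappa>2 assume \<kappa>: "\<kappa>1 \<in> {\<kappa>\<in>SL. rep ` \<kappa> = rep ` \<sigma>}" "\<kappa>2 \<in> {\<kappa>\<in>SL. rep ` \<kappa> = rep ` \<sigma>}"
    "inv_into \<kappa>1 \<pi> (\<pi> x) = inv_into \<kappa>2 \<pi> (\<pi> x)"
  have "inv_into \<kappa>1 \<pi> (\<pi> x) \<in> cc_relint LM \<kappa>1"
    using rep_fiber_relint(3)[OF \<sigma> x] \<kappa>(1) by auto
  moreover have "inv_into \<kappa>1 \<pi> (\<pi> x) \<in> cc_relint LM \<kappa>2"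
    using rep_fiber_relint(3)[OF \<sigma> x] \<kappa>(2,3) by auto
  moreover have "inv_into \<kappa>1 \<pi> (\<pi> x) \<in> topspace L"
    using rep_fiber_relint(1)[OF \<sigma> x] SL_subset \<kappa>(1) by blast
  ultimately show "\<kappa>1 = \<kappa>2" using SL_relint \<kappa>(1,2) by blast
qed

lemma sep_weight_relint:
  assumes \<sigma>: "\<sigma> \<in> SL" and x: "x \<in> cc_relint sep_M (rep ` \<sigma>)"
  shows "sep_weight x = (\<Sum>\<kappa>\<in>{\<kappa>\<in>SL. rep ` \<kappa> = rep ` \<sigma>}. \<mu> (inv_into \<kappa> \<pi> (\<pi> x)))"
  unfolding sep_weight_def trace_def rep_fiber[OF \<sigma> x] sum.reindex[OF inj_on_rep_fiber[OF \<sigma> x]]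
  by (simp add: o_def)

lemma weight_sep: "cc_weight sep_top sep_cones sep_M sep_weight"
  unfolding cc_weight_def
proof (intro conjI ballI)
  fix x assume "x \<in> topspace sep_top"
  then show "0 < sep_weight x" using sep_weight_pos topspace_sep_top by simp
next
  fix \<sigma>' x y assume xy: "\<sigma>' \<in> sep_cones" "x \<in> cc_relint sep_M \<sigma>'" "y \<in> cc_relint sep_M \<sigma>'"
  then obtain \<sigma> where \<sigma>: "\<sigma> \<in> SL" "\<sigma>' = rep ` \<sigma>" unfolding sep_cones_def by auto
  have "\<mu> (inv_into \<kappa> \<pi> (\<pi> x)) = \<mu> (inv_into \<kappa> \<pi> (\<pi> y))" if "\<kappa> \<in> {\<kappa>\<in>SL. rep ` \<kappa> = rep ` \<sigma>}" for \<kappa>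
    using mu_relint that rep_fiber_relint(3)[OF \<sigma>(1)] xy(2,3) \<sigma>(2) by blast
  then show "sep_weight x = sep_weight y"
    using sep_weight_relint[OF \<sigma>(1)] xy(2,3) \<sigma>(2) by (auto intro: sum.cong)
qed

lemma morphism_sep: "cc_morphism sep_top sep_cones sep_M euclidean \<Sigma> fanM \<pi>"
  unfolding cc_morphism_def
proof (intro conjI ballI continuous_pi_sep)
  fix \<sigma>' assume "\<sigma>' \<in> sep_cones"
  then obtain \<sigma> where \<sigma>: "\<sigma> \<in> SL" "\<sigma>' = rep ` \<sigma>" unfolding sep_cones_def by auto
  have "zext \<sigma>' (m \<circ> \<pi>) \<in> sep_M \<sigma>'" if m: "m \<in> fanM (\<pi> ` \<sigma>)" for m
  proof -
    obtain u where u: "m = zext (\<pi> ` \<sigma>) (\<lambda>x. u \<bullet> x)" "int_vec u" using m unfolding fanM_def by blast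
    have "zext \<sigma>' (m \<circ> \<pi>) = zext \<sigma>' (\<lambda>x. u \<bullet> \<pi> x)"
      using pi_rep_cone[OF \<sigma>(1)] \<sigma>(2) unfolding u(1) zext_def by (auto simp: fun_eq_iff)
    then show ?thesis using inner_pi_in_sep_M[OF u(2)] by simp
  qed
  then show "\<exists>\<tau>\<in>\<Sigma>. \<pi> ` \<sigma>' \<subseteq> \<tau> \<and> (\<forall>m\<in>fanM \<tau>. zext \<sigma>' (m \<circ> \<pi>) \<in> sep_M \<sigma>')"
    using pi_cone[OF \<sigma>(1)] pi_rep_cone[OF \<sigma>(1)] \<sigma>(2) by blast
qed

lemma trace_sep_weight:
  assumes V: "V \<subseteq> sep_points"
  shows "trace \<pi> sep_weight V y = trace \<pi> \<mu> {x\<in>topspace L. rep x \<in> V} y"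
proof -
  define S where "S = {x\<in>topspace L. rep x \<in> V \<and> \<pi> x = y}"
  have "S \<subseteq> {x\<in>topspace L. \<pi> x = y}" "{x\<in>V. \<pi> x = y} \<subseteq> {x\<in>topspace L. \<pi> x = y}"
    using V sep_points_subset unfolding S_def by auto
  then have fin: "finite S" "finite {x\<in>V. \<pi> x = y}" using finite_fiber finite_subset by blast+
  have "{x\<in>topspace L. rep x = x'} = {x\<in>S. rep x = x'}" if "x' \<in> {x\<in>V. \<pi> x = y}" for x'
    using that pi_rep unfolding S_def by force
  then have "trace \<pi> sep_weight V y = (\<Sum>x'\<in>{x\<in>V. \<pi> x = y}. sum \<mu> {x\<in>S. rep x = x'})"
    unfolding trace_def sep_weight_def by simp
  also have "\<dots> = sum \<mu> S" by (rule sum.group[OF fin]) (use pi_rep in \<open>auto simp: S_def\<close>)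
  also have "\<dots> = trace \<pi> \<mu> {x\<in>topspace L. rep x \<in> V} y"
    unfolding trace_def S_def by (rule arg_cong[where f = "sum \<mu>"]) blast
  finally show ?thesis .
qed

lemma finite_components_over:
  assumes U: "openin euclidean U" "connectedin euclidean U" "y \<in> U"
  shows "finite (connected_components_of (subtopology L {x\<in>topspace L. \<pi> x \<in> U}))"
    (is "finite ?Ks")
proof -
  have "\<exists>x\<in>K. \<pi> x = y" if K: "K \<in> ?Ks" for K
  proof -
    obtain x0 where x0: "x0 \<in> K" using nonempty_connected_components_of K by blast
    have KL: "K \<subseteq> {x\<in>topspace L. \<pi> x \<in> U}" using connected_components_of_subset[OF K] by simp
    then have x0L: "x0 \<in> topspace L" "\<pi> x0 \<in> U" using x0 by auto
    have "{x\<in>K. \<pi> x = \<pi> x0} \<subseteq> {x\<in>topspace L. \<pi> x = \<pi> x0}" using KL by auto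
    then have "finite {x\<in>K. \<pi> x = \<pi> x0}" using finite_fiber finite_subset by blast
    then have "\<mu> x0 \<le> trace \<pi> \<mu> K (\<pi> x0)" unfolding trace_def using x0 by (intro member_le_sum) auto
    moreover have "trace \<pi> \<mu> K (\<pi> x0) = trace \<pi> \<mu> K y"
      by (rule pi_trace_locally_constant[OF U(1,2) K x0L(2) U(3)])
    ultimately have "0 < trace \<pi> \<mu> K y" using mu_pos[OF x0L(1)] by linarith
    then have "{x\<in>K. \<pi> x = y} \<noteq> {}" unfolding trace_def by (metis less_irrefl sum.empty)
    then show ?thesis by blast
  qed
  then obtain ch where ch: "\<And>K. K \<in> ?Ks \<Longrightarrow> ch K \<in> K \<and> \<pi> (ch K) = y" by metis
  have "inj_on ch ?Ks"
  proof
    fix K1 K2 assume K: "K1 \<in> ?Ks" "K2 \<in> ?Ks" "ch K1 = ch K2"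
    then have "\<not> disjnt K1 K2" using ch[OF K(1)] ch[OF K(2)] unfolding disjnt_def by auto
    then show "K1 = K2" using connected_components_of_disjoint[OF K(1,2)] by blast
  qed
  moreover have "ch ` ?Ks \<subseteq> {x\<in>topspace L. \<pi> x = y}"
  proof
    fix x assume "x \<in> ch ` ?Ks"
    then obtain K where "K \<in> ?Ks" "x = ch K" by blast
    then show "x \<in> {x\<in>topspace L. \<pi> x = y}" using ch connected_components_of_subset by fastforce
  qed
  ultimately show ?thesis using finite_fiber finite_subset finite_imageD by blast
qed

lemma preimage_component_Union:
  assumes V: "V \<in> connected_components_of (subtopology sep_top {x\<in>topspace sep_top. \<pi> x \<in> U})"
  shows "{x\<in>topspace L. rep x \<in> V} =
           \<Union>{K\<in>connected_components_of (subtopology L {x\<in>topspace L. \<pi> x \<in> U}). K \<subseteq> {x\<in>topspace L. rep x \<in> V}}"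
    (is "?P = \<Union>{K\<in>connected_components_of ?X. K \<subseteq> ?P}")
proof (intro equalityI subsetI)
  fix x assume x: "x \<in> ?P"
  have VU: "\<forall>z\<in>V. \<pi> z \<in> U" using connected_components_of_subset[OF V] by auto
  have xX: "x \<in> topspace ?X" using x VU pi_rep by auto
  have "continuous_map ?X (subtopology sep_top {x\<in>topspace sep_top. \<pi> x \<in> U}) rep"
    using continuous_map_from_subtopology[OF continuous_rep] pi_rep topspace_sep_top sep_points_def
    by (intro continuous_map_into_subtopology) auto
  then have "connectedin (subtopology sep_top {x\<in>topspace sep_top. \<pi> x \<in> U})
      (rep ` connected_component_of_set ?X x)"
    by (rule connectedin_continuous_map_image[OF _ connectedin_connected_component_of])
  moreover have "x \<in> connected_component_of_set ?X x" using xX by (simp add: connected_component_of_refl)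
  ultimately have "rep ` connected_component_of_set ?X x \<subseteq> V"
    using connected_components_of_maximal[OF V] x unfolding disjnt_def by blast
  moreover have "connected_component_of_set ?X x \<subseteq> topspace L"
    using connected_component_of_subset_topspace[of ?X x] by auto
  ultimately have "connected_component_of_set ?X x \<subseteq> ?P" by auto
  moreover have "connected_component_of_set ?X x \<in> connected_components_of ?X"
    using xX by (simp add: connected_component_in_connected_components_of)
  ultimately show "x \<in> \<Union>{K\<in>connected_components_of ?X. K \<subseteq> ?P}"
    using \<open>x \<in> connected_component_of_set ?X x\<close> by blast
qed blast

lemma covering_sep: "branched_covering sep_top sep_cones sep_M sep_weight euclidean \<Sigma> fanM \<pi>"
  unfolding branched_covering_def
proof (intro conjI allI impI ballI morphism_sep)
  show "\<pi> ` topspace sep_top = topspace euclidean"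
    using pi_surj pi_rep unfolding topspace_sep_top sep_points_def by (auto simp: image_image)
next
  fix \<sigma>' assume "\<sigma>' \<in> sep_cones"
  then show "\<exists>\<tau>\<in>\<Sigma>. homeomorphic_map (subtopology sep_top \<sigma>') (subtopology euclidean \<tau>) \<pi>"
    using pi_homeomorphic_rep_cone pi_cone unfolding sep_cones_def by blast
next
  fix U V y z
  assume UV: "openin euclidean U \<and> connectedin euclidean U \<and>
    V \<in> connected_components_of (subtopology sep_top {x\<in>topspace sep_top. \<pi> x \<in> U})"
    and yz: "y \<in> U" "z \<in> U"
  define Ks where "Ks = {K\<in>connected_components_of (subtopology L {x\<in>topspace L. \<pi> x \<in> U}).
    K \<subseteq> {x\<in>topspace L. rep x \<in> V}}"
  have "V \<subseteq> sep_points" using connected_components_of_subset UV topspace_sep_top by fastforce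
  moreover have "{x\<in>topspace L. rep x \<in> V} = \<Union>Ks"
    unfolding Ks_def using preimage_component_Union UV by blast
  ultimately have trace_V: "trace \<pi> sep_weight V w = trace \<pi> \<mu> (\<Union>Ks) w" for w
    using trace_sep_weight by metis
  have "Ks \<subseteq> connected_components_of (subtopology L {x\<in>topspace L. \<pi> x \<in> U})"
    unfolding Ks_def by blast
  then have "finite Ks" "pairwise disjnt Ks"
    using finite_subset[OF _ finite_components_over[of U y]] UV yz
      pairwise_subset[OF pairwise_disjoint_connected_components_of] by auto
  moreover have "finite {x\<in>K. \<pi> x = w}" if "K \<in> Ks" for K w
  proof -
    have "K \<subseteq> topspace L" using that connected_components_of_subset unfolding Ks_def by fastforce
    then have "{x\<in>K. \<pi> x = w} \<subseteq> {x\<in>topspace L. \<pi> x = w}" by blast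
    then show ?thesis using finite_fiber finite_subset by blast
  qed
  moreover have "trace \<pi> \<mu> K y = trace \<pi> \<mu> K z" if "K \<in> Ks" for K
    using that pi_trace_locally_constant[of U K y z] UV yz unfolding Ks_def by blast
  ultimately show "trace \<pi> sep_weight V y = trace \<pi> sep_weight V z"
    unfolding trace_V by (simp add: trace_Union_disjoint)
qed

lemma multisection_sep: "trop_lag_ms \<Sigma> r sep_top sep_cones sep_M sep_weight \<pi> \<phi>"
  unfolding trop_lag_ms_def
proof (intro conjI allI ballI cone_complex_sep weight_sep covering_sep continuous_phi_sep)
  fix y
  show "trace \<pi> sep_weight (topspace sep_top) y = r"
  proof -
    have "{x\<in>topspace L. rep x \<in> sep_points} = topspace L" unfolding sep_points_def by auto
    then show ?thesis using trace_sep_weight[of sep_points y] trace_rank topspace_sep_top by simp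
  qed
next
  fix \<sigma>' assume "\<sigma>' \<in> sep_cones"
  have "\<phi> = comb_pi_phi \<pi> \<phi> 0 1" unfolding comb_pi_phi_def by (simp add: fun_eq_iff)
  moreover have "int_vec 0" unfolding int_vec_def by simp
  ultimately show "zext \<sigma>' \<phi> \<in> sep_M \<sigma>'" unfolding sep_M_iff by metis
qed

section \<open>Separability, connectedness and comparison\<close>

lemma sep_cone_subset_if_phi_agrees:
  assumes \<tau>: "\<tau>1 \<in> sep_cones" "\<tau>2 \<in> sep_cones" "\<pi> ` \<tau>1 = \<pi> ` \<tau>2" "dim (\<pi> ` \<tau>1) \<le> 1"
    and agree: "\<forall>x\<in>\<tau>1. \<forall>x'\<in>\<tau>2. \<pi> x = \<pi> x' \<longrightarrow> \<phi> x = \<phi> x'"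
  shows "\<tau>1 \<subseteq> \<tau>2"
proof
  obtain \<sigma>1 \<sigma>2 where \<sigma>: "\<sigma>1 \<in> SL" "\<tau>1 = rep ` \<sigma>1" "\<sigma>2 \<in> SL" "\<tau>2 = rep ` \<sigma>2"
    using \<tau>(1,2) unfolding sep_cones_def by auto
  fix y assume "y \<in> \<tau>1"
  then obtain z where z: "z \<in> \<sigma>1" "y = rep z" using \<sigma> by auto
  obtain x' where x': "x' \<in> \<tau>2" "\<pi> x' = \<pi> y" using \<tau>(3) \<open>y \<in> \<tau>1\<close> by (metis imageE imageI)
  then obtain z' where z': "z' \<in> \<sigma>2" "x' = rep z'" using \<sigma> by auto
  have zL: "z \<in> topspace L" "z' \<in> topspace L" using z z' SL_subset \<sigma> by auto
  have "\<pi> z = \<pi> z'" "\<phi> z = \<phi> z'"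
    using agree \<open>y \<in> \<tau>1\<close> x' z z' zL pi_rep phi_rep by metis+
  moreover have "z \<in> skeleton" "z' \<in> skeleton"
    unfolding skeleton_def using \<sigma> z z' \<tau>(3,4) pi_rep_cone by auto
  ultimately have "glued z z'" unfolding glued_def using zL by simp
  then show "y \<in> \<tau>2" using rep_eq z z' \<sigma> by auto
qed

lemma origin_in_skeleton:
  assumes "z \<in> topspace L" "\<pi> z = 0"
  shows "z \<in> skeleton" "\<phi> z = 0"
proof -
  obtain \<kappa> where \<kappa>: "\<kappa> \<in> SL" "z \<in> cc_relint LM \<kappa>" using SL_relint[OF assms(1)] by blast
  have "z \<in> \<kappa>" using \<kappa>(2) unfolding cc_relint_def by auto
  moreover have "\<pi> ` \<kappa> = {0}"
    using zero_in_face_relint[OF pi_cone[OF \<kappa>(1)]] face_relint_pi[OF \<kappa>] assms(2) by simp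
  ultimately show "z \<in> skeleton" unfolding skeleton_def using \<kappa>(1) by auto
  show "\<phi> z = 0" using phi_linear_in_pi[OF \<kappa>(1)] \<open>z \<in> \<kappa>\<close> assms(2) by auto
qed

text \<open>All points over the origin carry \<open>\<phi> = 0\<close> and lie on the skeleton, so they are glued to a
  single point shared by all cones.\<close>

lemma connected_sep: "connected_space sep_top"
proof -
  obtain z0 where z0: "z0 \<in> topspace L" "\<pi> z0 = 0" using pi_surj by (metis UNIV_I imageE)
  have common: "rep z0 \<in> rep ` \<sigma>" if \<sigma>: "\<sigma> \<in> SL" for \<sigma>
  proof -
    have "0 \<in> \<pi> ` \<sigma>" using pi_cone_of[OF \<sigma>] zero_in_cone_of by metis
    then obtain z where z: "z \<in> \<sigma>" "\<pi> z = 0" by auto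
    then have "z \<in> topspace L" using SL_subset \<sigma> by auto
    then have "glued z z0" unfolding glued_def using z0 z origin_in_skeleton by simp
    then have "rep z0 = rep z" using rep_eq by simp
    then show ?thesis using z(1) by simp
  qed
  have "connectedin sep_top (rep ` \<sigma>)" if \<sigma>: "\<sigma> \<in> SL" for \<sigma>
  proof -
    have "connected (\<pi> ` \<sigma>)" using pi_cone_of[OF \<sigma>] convex_cone_of convex_connected by metis
    then have "connectedin (subtopology L \<sigma>) \<sigma>"
      using homeomorphic_map_connectedness_eq[OF pi_homeomorphic[OF \<sigma>], of \<sigma>] SL_subset[OF \<sigma>]
      by (simp add: connectedin_subtopology)
    then show ?thesis
      using connectedin_continuous_map_image[OF continuous_rep] by (simp add: connectedin_subtopology)
  qed
  moreover have "SL \<noteq> {}" using z0 topspace_eq_Union_SL by auto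
  moreover have "rep z0 \<in> (\<Inter>\<sigma>\<in>SL. rep ` \<sigma>)" using common by blast
  ultimately have "connectedin sep_top (\<Union>\<sigma>\<in>SL. rep ` \<sigma>)"
    by (intro connectedin_Union) blast+
  moreover have "topspace sep_top = (\<Union>\<sigma>\<in>SL. rep ` \<sigma>)"
    unfolding topspace_sep_top sep_points_def using topspace_eq_Union_SL by auto
  ultimately show ?thesis using connectedin_topspace by metis
qed

lemma separable_sep: "separable \<Sigma> sep_top sep_cones \<pi> \<phi>"
  unfolding separable_def k_separable_def
proof (intro conjI connected_sep ballI impI notI)
  fix \<tau> \<tau>a \<tau>b assume \<tau>: "\<tau> \<in> fan_cones_dim \<Sigma> 1" and ab: "\<tau>a \<in> sep_cones" "\<tau>b \<in> sep_cones"
    and c: "\<tau>a \<noteq> \<tau>b \<and> \<pi> ` \<tau>a = \<tau> \<and> \<pi> ` \<tau>b = \<tau>"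
    and agree: "\<forall>x\<in>\<tau>a. \<forall>x'\<in>\<tau>b. \<pi> x = \<pi> x' \<longrightarrow> \<phi> x = \<phi> x'"
  have "dim \<tau> \<le> 1" using \<tau> unfolding fan_cones_dim_def by simp
  moreover have "\<forall>x\<in>\<tau>b. \<forall>x'\<in>\<tau>a. \<pi> x = \<pi> x' \<longrightarrow> \<phi> x = \<phi> x'" using agree by metis
  ultimately have "\<tau>a \<subseteq> \<tau>b" "\<tau>b \<subseteq> \<tau>a"
    using sep_cone_subset_if_phi_agrees[OF ab] sep_cone_subset_if_phi_agrees[OF ab(2,1)] c agree
    by auto
  then show False using c by blast
qed

lemma rep_morphism: "cc_morphism L SL LM sep_top sep_cones sep_M rep"
  unfolding cc_morphism_def
proof (intro conjI ballI continuous_rep)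
  fix \<sigma> assume \<sigma>: "\<sigma> \<in> SL"
  have "zext \<sigma> (m \<circ> rep) \<in> LM \<sigma>" if m: "m \<in> sep_M (rep ` \<sigma>)" for m
  proof -
    obtain u k where m: "m = zext (rep ` \<sigma>) (comb_pi_phi \<pi> \<phi> u k)" "int_vec u"
      using m unfolding sep_M_iff by blast
    have "zext \<sigma> (m \<circ> rep) = zext \<sigma> (comb_pi_phi \<pi> \<phi> u k)"
      unfolding m(1) zext_def using comb_pi_phi_rep SL_subset[OF \<sigma>] by (auto simp: fun_eq_iff)
    then show ?thesis using comb_pi_phi_in_LM[OF \<sigma> m(2)] by simp
  qed
  then show "\<exists>\<sigma>'\<in>sep_cones. rep ` \<sigma> \<subseteq> \<sigma>' \<and> (\<forall>m\<in>sep_M \<sigma>'. zext \<sigma> (m \<circ> rep) \<in> LM \<sigma>)"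
    using \<sigma> unfolding sep_cones_def by blast
qed

lemma sep_le: "ms_le sep_top sep_cones sep_M sep_weight \<pi> \<phi> L SL LM \<mu> \<pi> \<phi>"
  unfolding ms_le_def sep_weight_def
  using rep_morphism topspace_sep_top pi_rep phi_rep unfolding sep_points_def by blast

lemma sep_le_refl: "ms_le sep_top sep_cones sep_M sep_weight \<pi> \<phi> sep_top sep_cones sep_M sep_weight \<pi> \<phi>"
  unfolding ms_le_def
proof (intro exI[of _ "\<lambda>x. x"] conjI ballI)
  show "cc_morphism sep_top sep_cones sep_M sep_top sep_cones sep_M (\<lambda>x. x)"
    unfolding cc_morphism_def
  proof (intro conjI ballI continuous_map_id[unfolded id_def])
    fix \<sigma>' assume "\<sigma>' \<in> sep_cones"
    moreover have "zext \<sigma>' (m \<circ> (\<lambda>x. x)) = m" if "m \<in> sep_M \<sigma>'" for m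
      using that unfolding sep_M_def zext_def by (auto simp: fun_eq_iff)
    ultimately show "\<exists>\<sigma>''\<in>sep_cones. (\<lambda>x. x) ` \<sigma>' \<subseteq> \<sigma>'' \<and> (\<forall>m\<in>sep_M \<sigma>''. zext \<sigma>' (m \<circ> (\<lambda>x. x)) \<in> sep_M \<sigma>')"
      by auto
  qed
  fix y assume "y \<in> topspace sep_top"
  then have "{x\<in>topspace sep_top. x = y} = {y}" by auto
  then show "trace (\<lambda>x. x) sep_weight (topspace sep_top) y = sep_weight y" unfolding trace_def by simp
qed auto

end

theorem proposition3p14:
  fixes \<Sigma> :: "(real^'n) set set"
    and L :: "'a topology" and SL :: "'a set set" and LM :: "'a set \<Rightarrow> ('a \<Rightarrow> real) set"
    and \<mu> :: "'a \<Rightarrow> nat" and \<pi> :: "'a \<Rightarrow> real^'n" and \<phi> :: "'a \<Rightarrow> real" and r :: nat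
  assumes "complete_fan \<Sigma>"
    and "trop_lag_ms \<Sigma> r L SL LM \<mu> \<pi> \<phi>"
  shows "\<exists>(Ls::'a topology) Ss Ms \<mu>s \<pi>s \<phi>s.
           trop_lag_ms \<Sigma> r Ls Ss Ms \<mu>s \<pi>s \<phi>s \<and>
           separable \<Sigma> Ls Ss \<pi>s \<phi>s \<and>
           ms_le Ls Ss Ms \<mu>s \<pi>s \<phi>s L SL LM \<mu> \<pi> \<phi> \<and>
           (connected_space L \<longrightarrow> sim_c \<Sigma> r L SL LM \<mu> \<pi> \<phi> Ls Ss Ms \<mu>s \<pi>s \<phi>s)"
proof -
  interpret tropical_multisection \<Sigma> r L SL LM \<mu> \<pi> \<phi> using assms by unfold_locales
  have "sim_c \<Sigma> r L SL LM \<mu> \<pi> \<phi> sep_top sep_cones sep_M sep_weight \<pi> \<phi>" if "connected_space L"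
    unfolding sim_c_def using assms(2) that multisection_sep connected_sep sep_le sep_le_refl by blast
  then show ?thesis using multisection_sep separable_sep sep_le by blast
qed

end
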